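(* Let $b\ge2$ be an integer, $\gamma\in(0,1)$, and let $\phi$ be a real analytic $\mathbb{Z}$-periodic function satisfying condition (H) (for all $\mathbf{i}\neq\mathbf{j}\in\Sigma$, $x\mapsto S(x,\mathbf{j})-S(x,\mathbf{i})$ is not identically zero on $[0,1]$). Then there exist $\ell_0\in\mathbb{N}$ and $\varepsilon_0>0$ such that for Lebesgue-a.e. $x\in[0,1]$ the following holds: for every integer $\ell\ge\ell_0$ there exists a set $Q_{x,\ell}\subset\mathbb{Z}_+$ such that (i) $Q_{x,\ell}$ is infinite; (ii) for every $\mathbf{w}\in\Lambda^{\ell}$ and every $n\in Q_{x,\ell}$, any two distinct points $p\neq q$ of $X^{\mathbf{w},x}_{\hat n}$ satisfy $|p-q|>\varepsilon_0^{\hat n}$, where $X^{\mathbf{w},x}_{N}=\{S(x,\mathbf{j}\mathbf{w}):\mathbf{j}\in\Lambda^{N-\ell}\}$ for $N>\ell$ and $X^{\mathbf{w},x}_N=\{0\}$ for $N\le\ell$.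
   Context: $\Lambda=\{0,\dots,b-1\}$, $\Sigma=\Lambda^{\mathbb{Z}_+}$. For a word $\mathbf{j}=j_1\cdots j_p$ of length $1\le p\le\infty$ and $x\in[0,1]$, $S(x,\mathbf{j})=\sum_{n=1}^{p}\gamma^{n-1}\phi\big(\frac{x+j_1+j_2b+\cdots+j_nb^{n-1}}{b^n}\big)$; $\mathbf{j}\mathbf{w}$ denotes concatenation of words. For $n\in\mathbb{N}$, $\hat n$ is the unique integer with $\gamma^{\hat n}\le b^{-n}<\gamma^{\hat n-1}$. *)

theory Defs
  imports "HOL-Analysis.Analysis"
begin

definition real_analytic :: "(real \<Rightarrow> real) \<Rightarrow> bool" where
  "real_analytic f \<longleftrightarrow> (\<forall>x0. \<exists>r>0. \<exists>a::nat \<Rightarrow> real.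
      \<forall>y. \<bar>y - x0\<bar> < r \<longrightarrow> (\<lambda>n. a n * (y - x0) ^ n) sums f y)"

text \<open>Finite words over Lambda = {0..b-1} are lists; the letter j_k is js ! (k-1).
  S(x, j) for a finite word j = j_1 ... j_p.\<close>
definition S_fin :: "nat \<Rightarrow> real \<Rightarrow> (real \<Rightarrow> real) \<Rightarrow> real \<Rightarrow> nat list \<Rightarrow> real" where
  "S_fin b \<gamma> \<phi> x js = (\<Sum>n=1..length js. \<gamma> ^ (n - 1) *
      \<phi> ((x + (\<Sum>k=1..n. real (js ! (k - 1)) * real b ^ (k - 1))) / real b ^ n))"

text \<open>Infinite words in Sigma: sequences s with j_k = s (k-1).\<close>
definition S_inf :: "nat \<Rightarrow> real \<Rightarrow> (real \<Rightarrow> real) \<Rightarrow> real \<Rightarrow> (nat \<Rightarrow> nat) \<Rightarrow> real" where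
  "S_inf b \<gamma> \<phi> x s = (\<Sum>n. \<gamma> ^ n *
      \<phi> ((x + (\<Sum>k=1..Suc n. real (s (k - 1)) * real b ^ (k - 1))) / real b ^ Suc n))"

definition Sigma_b :: "nat \<Rightarrow> (nat \<Rightarrow> nat) set" where
  "Sigma_b b = {s. \<forall>k. s k < b}"

definition words :: "nat \<Rightarrow> nat \<Rightarrow> nat list set" where
  "words b m = {js. length js = m \<and> (\<forall>j\<in>set js. j < b)}"

definition cond_H :: "nat \<Rightarrow> real \<Rightarrow> (real \<Rightarrow> real) \<Rightarrow> bool" where
  "cond_H b \<gamma> \<phi> \<longleftrightarrow> (\<forall>i\<in>Sigma_b b. \<forall>j\<in>Sigma_b b. i \<noteq> j \<longrightarrow>
      (\<exists>x\<in>{0..1}. S_inf b \<gamma> \<phi> x j - S_inf b \<gamma> \<phi> x i \<noteq> 0))"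

definition hat :: "nat \<Rightarrow> real \<Rightarrow> nat \<Rightarrow> int" where
  "hat b \<gamma> n = (THE k::int. \<gamma> powi k \<le> 1 / real b ^ n \<and> 1 / real b ^ n < \<gamma> powi (k - 1))"

definition Xset :: "nat \<Rightarrow> real \<Rightarrow> (real \<Rightarrow> real) \<Rightarrow> nat list \<Rightarrow> real \<Rightarrow> int \<Rightarrow> real set" where
  "Xset b \<gamma> \<phi> w x N = (if N > int (length w)
      then {S_fin b \<gamma> \<phi> x (js @ w) | js. js \<in> words b (nat (N - int (length w)))}
      else {0})"

end

(*
  Since \<phi> is real analytic and periodic, all its derivatives obey uniform Cauchy estimates
  |\<phi>^(k)| \<le> M k! R^k, so S(., s) and all its derivatives depend continuously on the digit
  sequence s \<in> \<Sigma>. For s, t \<in> \<Sigma> with different first letters, S(., s) - S(., t) is not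
  identically zero by (H), hence by the identity theorem some derivative is nonzero at each point;
  compactness of \<Sigma> \<times> \<Sigma> \<times> [0,1] gives m and c > 0 such that some derivative of order at
  most m has modulus at least c, and this survives truncation to long finite words. A van der
  Corput type sublevel estimate then bounds the measure of {y. |S(y, u) - S(y, v)| < \<delta>} by
  C \<delta>^\<alpha>, uniformly in words u, v of length N \<ge> L with different first letters.

  Two distinct points of X^{w,x}_N come from words j w and j' w with a longest common prefix p;
  stripping p multiplies their difference by \<gamma>^|p| and replaces x by an affine image with slope
  b^-|p|. Summing the sublevel bound over all p and pairs of tails shows that the set of x for
  which two such points are closer than (\<gamma> \<rho>)^N has measure O(N 4^-N) for a suitable \<rho>, and
  Borel-Cantelli gives the separation for all large N, hence for all large n with N = hat n.
*)
theory Submission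
  imports Defs "HOL-Library.Sublist"
begin

section \<open>Derivatives of a real analytic periodic function\<close>

lemma fact_add_le_pow2: "fact (j + n) \<le> fact j * fact n * (2::real) ^ (j + n)"
proof -
  have "fact (n + j) = fact j * fact n * real ((n + j) choose j)"
    using binomial_fact_lemma[of j "n + j"]
    by (metis add_diff_cancel_right' le_add2 mult.commute of_nat_fact of_nat_mult)
  moreover have "real ((n + j) choose j) \<le> 2 ^ (n + j)"
    using binomial_le_pow2[of "n + j" j] by (metis of_nat_le_iff of_nat_numeral of_nat_power)
  ultimately show ?thesis by (simp add: add.commute mult_left_mono)
qed

lemma diffs_iterate: "(diffs ^^ k) (a :: nat \<Rightarrow> real) n = fact (n + k) / fact n * a (n + k)"
proof (induction k arbitrary: n)
  case 0
  then show ?case by simp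
next
  case (Suc k)
  have "(diffs ^^ Suc k) a n = of_nat (Suc n) * ((diffs ^^ k) a (Suc n))"
    by (simp add: diffs_def)
  also have "\<dots> = of_nat (Suc n) * (fact (Suc n + k) / fact (Suc n) * a (Suc n + k))"
    using Suc by simp
  also have "\<dots> = (of_nat (Suc n) / fact (Suc n)) * fact (n + Suc k) * a (n + Suc k)"
    by simp
  also have "of_nat (Suc n) / fact (Suc n) = (1::real) / fact n"
    by (simp add: fact_Suc field_simps del: of_nat_Suc)
  finally show ?case by simp
qed

lemma shifted_power_series_has_derivative:
  fixes c :: "nat \<Rightarrow> real"
  assumes "\<And>z. \<bar>z\<bar> < r \<Longrightarrow> summable (\<lambda>n. c n * z ^ n)" and "\<bar>z\<bar> < r"
  shows "((\<lambda>y. \<Sum>n. c n * (y - x0) ^ n) has_real_derivative (\<Sum>n. diffs c n * z ^ n)) (at (x0 + z))"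
proof -
  have "((\<lambda>w. \<Sum>n. c n * w ^ n) has_real_derivative (\<Sum>n. diffs c n * z ^ n))
      (at ((\<lambda>y. y - x0) (x0 + z)))"
    using termdiffs_strong'[of r c z] assms by simp
  moreover have "((\<lambda>y. y - x0) has_real_derivative 1) (at (x0 + z))"
    by (auto intro!: derivative_eq_intros)
  ultimately show ?thesis
    using DERIV_chain'[of "\<lambda>y. y - x0" 1 "x0 + z" UNIV "\<lambda>w. \<Sum>n. c n * w ^ n"] by simp
qed

locale analytic_periodic =
  fixes \<phi> :: "real \<Rightarrow> real"
  assumes analytic: "real_analytic \<phi>" and periodic: "\<forall>x. \<phi> (x + 1) = \<phi> x"
begin

definition Dphi :: "nat \<Rightarrow> real \<Rightarrow> real" where
  "Dphi k = (deriv ^^ k) \<phi>"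

lemma Dphi_0 [simp]: "Dphi 0 = \<phi>"
  by (simp add: Dphi_def)

lemma Dphi_Suc: "Dphi (Suc k) = deriv (Dphi k)"
  by (simp add: Dphi_def)

lemma Dphi_power_series:
  obtains r a where "r > 0"
    and "\<And>k z. \<bar>z\<bar> < r \<Longrightarrow> summable (\<lambda>n. (diffs ^^ k) a n * z ^ n)"
    and "\<And>k z. \<bar>z\<bar> < r \<Longrightarrow> Dphi k (x0 + z) = (\<Sum>n. (diffs ^^ k) a n * z ^ n)"
proof -
  obtain r a where r: "r > 0"
    and sums: "\<And>y. \<bar>y - x0\<bar> < r \<Longrightarrow> (\<lambda>n. a n * (y - x0) ^ n) sums \<phi> y"
    using analytic unfolding real_analytic_def by blast
  have summable: "summable (\<lambda>n. (diffs ^^ k) a n * z ^ n)" if "\<bar>z\<bar> < r" for k z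
    using that
  proof (induction k arbitrary: z)
    case 0
    then show ?case using sums[of "x0 + z"] by (auto simp: sums_iff)
  next
    case (Suc k)
    then show ?case using termdiff_converges[of z r "(diffs ^^ k) a"] by auto
  qed
  have series: "Dphi k (x0 + z) = (\<Sum>n. (diffs ^^ k) a n * z ^ n)" if "\<bar>z\<bar> < r" for k z
    using that
  proof (induction k arbitrary: z)
    case 0
    then show ?case using sums[of "x0 + z"] by (simp add: sums_iff)
  next
    case (Suc k)
    have "((\<lambda>y. \<Sum>n. (diffs ^^ k) a n * (y - x0) ^ n) has_real_derivative
        (\<Sum>n. (diffs ^^ Suc k) a n * z ^ n)) (at (x0 + z))"
      using shifted_power_series_has_derivative[of r "(diffs ^^ k) a", OF summable Suc.prems]
      by simp
    then have "(Dphi k has_real_derivative (\<Sum>n. (diffs ^^ Suc k) a n * z ^ n)) (at (x0 + z))"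
    proof (rule has_field_derivative_transform_within_open)
      show "x0 + z \<in> ball x0 r"
        using Suc.prems by (simp add: dist_real_def)
      show "(\<Sum>n. (diffs ^^ k) a n * (y - x0) ^ n) = Dphi k y" if "y \<in> ball x0 r" for y
        using Suc.IH[of "y - x0"] that by (simp add: dist_real_def abs_minus_commute)
    qed simp
    then show ?case
      by (simp add: Dphi_Suc DERIV_imp_deriv)
  qed
  from r summable series show thesis
    by (rule that)
qed

lemma Dphi_has_derivative: "(Dphi k has_real_derivative Dphi (Suc k) y) (at y)"
proof -
  obtain r a where r: "r > 0"
    and summable: "\<And>k z. \<bar>z\<bar> < r \<Longrightarrow> summable (\<lambda>n. (diffs ^^ k) a n * z ^ n)"
    and series: "\<And>k z. \<bar>z\<bar> < r \<Longrightarrow> Dphi k (y + z) = (\<Sum>n. (diffs ^^ k) a n * z ^ n)"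
    using Dphi_power_series[of y] by blast
  have "((\<lambda>x. \<Sum>n. (diffs ^^ k) a n * (x - y) ^ n) has_real_derivative Dphi (Suc k) y) (at y)"
    using shifted_power_series_has_derivative[of r "(diffs ^^ k) a" 0 y] summable series[of 0 "Suc k"] r
    by simp
  then show ?thesis
  proof (rule has_field_derivative_transform_within_open)
    show "(\<Sum>n. (diffs ^^ k) a n * (x - y) ^ n) = Dphi k x" if "x \<in> ball y r" for x
      using series[of "x - y" k] that by (simp add: dist_real_def abs_minus_commute)
  qed (use r in auto)
qed

lemma Dphi_continuous: "continuous_on S (Dphi k)"
  using Dphi_has_derivative by (meson DERIV_isCont continuous_at_imp_continuous_on)

lemma Dphi_local_Cauchy_bound:
  obtains \<rho> A R where "\<rho> > 0" "A \<ge> 0" "R > 0"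
    and "\<And>k y. \<bar>y - x0\<bar> < \<rho> \<Longrightarrow> \<bar>Dphi k y\<bar> \<le> A * fact k * R ^ k"
proof -
  obtain r a where r: "r > 0"
    and summable: "\<And>k z. \<bar>z\<bar> < r \<Longrightarrow> summable (\<lambda>n. (diffs ^^ k) a n * z ^ n)"
    and series: "\<And>k z. \<bar>z\<bar> < r \<Longrightarrow> Dphi k (x0 + z) = (\<Sum>n. (diffs ^^ k) a n * z ^ n)"
    using Dphi_power_series[of x0] by blast
  define \<rho> where "\<rho> = r / 2"
  have \<rho>: "\<rho> > 0" "\<rho> < r"
    using r by (auto simp: \<rho>_def)
  have "(\<lambda>n. a n * \<rho> ^ n) \<longlonglongrightarrow> 0"
    using summable[of \<rho> 0] \<rho> by (simp add: summable_LIMSEQ_zero)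
  then have "Bseq (\<lambda>n. a n * \<rho> ^ n)"
    by (intro convergent_imp_Bseq) (auto simp: convergent_def)
  then obtain A where A: "A > 0" "\<And>n. \<bar>a n * \<rho> ^ n\<bar> \<le> A"
    unfolding Bseq_def by auto
  define R where "R = 2 / \<rho>"
  show thesis
  proof (rule that[of "\<rho> / 4" "2 * A" R])
    show "\<rho> / 4 > 0" "2 * A \<ge> 0" "R > 0"
      using \<rho> A by (auto simp: R_def)
    fix k y
    assume y: "\<bar>y - x0\<bar> < \<rho> / 4"
    define g where "g n = A * fact k * R ^ k * (1/2) ^ n" for n
    have term_le: "norm ((diffs ^^ k) a n * (y - x0) ^ n) \<le> g n" for n
    proof -
      have "\<bar>a (n + k)\<bar> \<le> A / \<rho> ^ (n + k)"
        using A(2)[of "n + k"] \<rho> by (simp add: abs_mult field_simps)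
      moreover have "\<bar>y - x0\<bar> ^ n \<le> (\<rho> / 4) ^ n"
        using y by (intro power_mono) auto
      moreover have "fact (n + k) / fact n \<le> fact k * (2::real) ^ (n + k)"
        using fact_add_le_pow2[of k n] by (simp add: field_simps add.commute)
      ultimately have "fact (n + k) / fact n * \<bar>a (n + k)\<bar> * \<bar>y - x0\<bar> ^ n
          \<le> fact k * 2 ^ (n + k) * (A / \<rho> ^ (n + k)) * (\<rho> / 4) ^ n"
        using A \<rho> by (intro mult_mono) auto
      also have "\<dots> = g n"
        using \<rho> by (simp add: g_def R_def power_add power_divide field_simps)
          (simp add: power_mult_distrib[symmetric])
      finally show ?thesis
        by (simp add: diffs_iterate abs_mult power_abs)
    qed
    have "g sums (2 * A * fact k * R ^ k)"
      unfolding g_def using sums_mult[OF geometric_sums[of "1/2::real"], of "A * fact k * R ^ k"]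
      by (simp add: mult_ac)
    then have "\<bar>\<Sum>n. (diffs ^^ k) a n * (y - x0) ^ n\<bar> \<le> 2 * A * fact k * R ^ k"
      using norm_suminf_le[of "\<lambda>n. (diffs ^^ k) a n * (y - x0) ^ n" g] term_le
      by (simp add: sums_iff)
    then show "\<bar>Dphi k y\<bar> \<le> 2 * A * fact k * R ^ k"
      using series[of "y - x0" k] \<rho> y by simp
  qed
qed

lemma Dphi_Cauchy_bound_on_compact:
  assumes "compact K"
  obtains M R where "M \<ge> 0" "R > 0" "\<And>k y. y \<in> K \<Longrightarrow> \<bar>Dphi k y\<bar> \<le> M * fact k * R ^ k"
proof -
  have "\<forall>x0. \<exists>\<rho> A R. \<rho> > 0 \<and> A \<ge> 0 \<and> R > 0 \<and>
      (\<forall>k y. \<bar>y - x0\<bar> < \<rho> \<longrightarrow> \<bar>Dphi k y\<bar> \<le> A * fact k * R ^ k)"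
    by (metis Dphi_local_Cauchy_bound)
  then obtain \<rho> A R where \<rho>: "\<And>x0. \<rho> x0 > 0" and A: "\<And>x0. A x0 \<ge> 0" and R: "\<And>x0. R x0 > 0"
    and bound: "\<And>x0 k y. \<bar>y - x0\<bar> < \<rho> x0 \<Longrightarrow> \<bar>Dphi k y\<bar> \<le> A x0 * fact k * R x0 ^ k"
    by metis
  obtain C where C: "C \<subseteq> K" "finite C" "K \<subseteq> (\<Union>c\<in>C. ball c (\<rho> c))"
    using compactE_image[OF assms, of K "\<lambda>c. ball c (\<rho> c)"] \<rho> by force
  define M where "M = (\<Sum>c\<in>C. A c)"
  define R' where "R' = 1 + (\<Sum>c\<in>C. R c)"
  have M: "M \<ge> 0" and "R' > 0"
    using A R by (auto simp: M_def R'_def sum_nonneg add_pos_nonneg less_imp_le)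
  moreover have "\<bar>Dphi k y\<bar> \<le> M * fact k * R' ^ k" if "y \<in> K" for k y
  proof -
    obtain c where c: "c \<in> C" "\<bar>y - c\<bar> < \<rho> c"
      using C(3) \<open>y \<in> K\<close> by (force simp: dist_real_def abs_minus_commute)
    have "A c \<le> M"
      unfolding M_def using C(2) c(1) A by (intro member_le_sum) auto
    moreover have "R c \<le> R'"
      using member_le_sum[of c C R] C(2) c(1) R by (force simp: R'_def less_imp_le)
    ultimately have "A c * fact k * R c ^ k \<le> M * fact k * R' ^ k"
      using A R M by (intro mult_mono power_mono) (auto intro: less_imp_le)
    then show ?thesis
      using bound[OF c(2), of k] by linarith
  qed
  ultimately show thesis
    using that by blast
qed

lemma Dphi_periodic_nat: "Dphi k (y + real n) = Dphi k y"
proof (induction k arbitrary: y n)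
  case 0
  show ?case
  proof (induction n)
    case (Suc n)
    then show ?case
      using periodic[rule_format, of "y + real n"] by (simp add: ac_simps)
  qed simp
next
  case (Suc k)
  have shift: "((\<lambda>y. y + real n) has_real_derivative 1) (at y)"
    by (auto intro!: derivative_eq_intros)
  have "((\<lambda>y. Dphi k (y + real n)) has_real_derivative Dphi (Suc k) (y + real n)) (at y)"
    using DERIV_chain'[OF shift Dphi_has_derivative[of k "y + real n"]] by simp
  moreover have "(\<lambda>y. Dphi k (y + real n)) = Dphi k"
    using Suc by auto
  ultimately have "(Dphi k has_real_derivative Dphi (Suc k) (y + real n)) (at y)"
    by simp
  then show ?case
    using Dphi_has_derivative[of k y] DERIV_unique by metis
qed

lemma Dphi_periodic_int: "Dphi k (y + real_of_int m) = Dphi k y"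
proof (cases "m \<ge> 0")
  case True
  then show ?thesis
    using Dphi_periodic_nat[of k y "nat m"] by simp
next
  case False
  then show ?thesis
    using Dphi_periodic_nat[of k "y + real_of_int m" "nat (- m)"] by simp
qed

lemma Dphi_Cauchy_bound:
  obtains M R where "M > 0" "R \<ge> 1" "\<And>k y. \<bar>Dphi k y\<bar> \<le> M * fact k * R ^ k"
proof -
  obtain M R where MR: "M \<ge> 0" "R > 0"
    and bound: "\<And>k y. y \<in> {0..1} \<Longrightarrow> \<bar>Dphi k y\<bar> \<le> M * fact k * R ^ k"
    using Dphi_Cauchy_bound_on_compact[of "{0..1}"] by blast
  have "\<bar>Dphi k y\<bar> \<le> (M + 1) * fact k * (R + 1) ^ k" for k y
  proof -
    have "Dphi k y = Dphi k (frac y)"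
      using Dphi_periodic_int[of k "frac y" "\<lfloor>y\<rfloor>"] by (simp add: frac_def)
    also have "\<bar>\<dots>\<bar> \<le> M * fact k * R ^ k"
      using bound[of "frac y"] frac_lt_1[of y] by (simp add: less_imp_le)
    also have "\<dots> \<le> (M + 1) * fact k * (R + 1) ^ k"
      using MR by (intro mult_mono power_mono) auto
    finally show ?thesis .
  qed
  then show thesis
    using that[of "M + 1" "R + 1"] MR by simp
qed

definition Cauchy_constants :: "real \<times> real" where
  "Cauchy_constants = (SOME p. fst p > 0 \<and> snd p \<ge> 1 \<and>
      (\<forall>k y. \<bar>Dphi k y\<bar> \<le> fst p * fact k * snd p ^ k))"

definition Dphi_bound :: "nat \<Rightarrow> real" where
  "Dphi_bound k = fst Cauchy_constants * fact k * snd Cauchy_constants ^ k"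

lemma Cauchy_constants:
  "fst Cauchy_constants > 0" "snd Cauchy_constants \<ge> 1" and abs_Dphi_le: "\<bar>Dphi k y\<bar> \<le> Dphi_bound k"
proof -
  have "\<exists>p. fst p > 0 \<and> snd p \<ge> 1 \<and> (\<forall>k y. \<bar>Dphi k y\<bar> \<le> fst p * fact k * snd p ^ k)"
    using Dphi_Cauchy_bound by (metis fst_conv snd_conv)
  from someI_ex[OF this] show "fst Cauchy_constants > 0" "snd Cauchy_constants \<ge> 1"
    "\<bar>Dphi k y\<bar> \<le> Dphi_bound k"
    unfolding Cauchy_constants_def[symmetric] Dphi_bound_def by auto
qed

lemma Dphi_bound_pos: "Dphi_bound k > 0"
  using Cauchy_constants by (simp add: Dphi_bound_def)

lemma Dphi_bound_mono: "r \<le> m \<Longrightarrow> Dphi_bound r \<le> Dphi_bound m"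
  using Cauchy_constants unfolding Dphi_bound_def
  by (intro mult_mono power_increasing fact_mono) auto

end

section \<open>The series \<open>S\<close> and its derivatives\<close>

locale weierstrass_series = analytic_periodic \<phi> for \<phi> :: "real \<Rightarrow> real" +
  fixes b :: nat and \<gamma> :: real
  assumes b_ge_2: "b \<ge> 2" and gamma_pos: "0 < \<gamma>" and gamma_less_1: "\<gamma> < 1"
begin

lemma b_pos: "real b > 0"
  using b_ge_2 by simp

lemma summable_gamma_power: "summable (\<lambda>n. \<gamma> ^ n * c)"
  using gamma_pos gamma_less_1 by (intro summable_mult2 summable_geometric) auto

lemma suminf_gamma_power: "(\<Sum>n. \<gamma> ^ n * c) = c / (1 - \<gamma>)"
  using suminf_mult2[OF summable_geometric[of \<gamma>], of c] gamma_pos gamma_less_1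
    suminf_geometric[of \<gamma>]
  by (simp add: field_simps)

text \<open>For a sequence of digits \<open>s\<close>, the \<open>n\<close>-th term of \<open>S(y, s)\<close> evaluates \<open>\<phi>\<close> at
  \<open>digit_point s n y\<close>; \<open>S_term r s n\<close> is the \<open>r\<close>-th derivative of that term.\<close>
definition digit_point :: "(nat \<Rightarrow> nat) \<Rightarrow> nat \<Rightarrow> real \<Rightarrow> real" where
  "digit_point s n y = (y + (\<Sum>i\<le>n. real (s i) * real b ^ i)) / real b ^ Suc n"

definition S_term :: "nat \<Rightarrow> (nat \<Rightarrow> nat) \<Rightarrow> nat \<Rightarrow> real \<Rightarrow> real" where
  "S_term r s n y = \<gamma> ^ n * (1 / real b ^ Suc n) ^ r * Dphi r (digit_point s n y)"

definition S_inf_deriv :: "nat \<Rightarrow> (nat \<Rightarrow> nat) \<Rightarrow> real \<Rightarrow> real" where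
  "S_inf_deriv r s y = (\<Sum>n. S_term r s n y)"

definition S_fin_deriv :: "nat \<Rightarrow> (nat \<Rightarrow> nat) \<Rightarrow> nat \<Rightarrow> real \<Rightarrow> real" where
  "S_fin_deriv r s N y = (\<Sum>n<N. S_term r s n y)"

lemma S_inf_eq: "S_inf b \<gamma> \<phi> x s = S_inf_deriv 0 s x"
  unfolding S_inf_def S_inf_deriv_def S_term_def digit_point_def Dphi_0
  by (simp only: One_nat_def sum.atLeast1_atMost_eq diff_Suc_Suc diff_zero lessThan_Suc_atMost
      power_0 mult_1_right)

lemma S_fin_eq: "S_fin b \<gamma> \<phi> x js = S_fin_deriv 0 (\<lambda>i. js ! i) (length js) x"
  unfolding S_fin_def S_fin_deriv_def S_term_def digit_point_def Dphi_0
  by (simp only: One_nat_def sum.atLeast1_atMost_eq diff_Suc_Suc diff_zero lessThan_Suc_atMost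
      power_0 mult_1_right)

lemma digit_point_cong: "(\<And>i. i \<le> n \<Longrightarrow> s i = t i) \<Longrightarrow> digit_point s n y = digit_point t n y"
  unfolding digit_point_def by (metis (no_types, lifting) atMost_iff sum.cong)

lemma S_fin_deriv_cong:
  assumes "\<And>i. i < N \<Longrightarrow> s i = t i"
  shows "S_fin_deriv r s N y = S_fin_deriv r t N y"
proof -
  have "digit_point s n y = digit_point t n y" if "n < N" for n
    using assms that by (intro digit_point_cong) auto
  then show ?thesis
    unfolding S_fin_deriv_def S_term_def by simp
qed

lemma S_term_has_derivative: "(S_term r s n has_real_derivative S_term (Suc r) s n y) (at y)"
proof -
  have "(digit_point s n has_real_derivative 1 / real b ^ Suc n) (at y)"
    unfolding digit_point_def using b_pos by (auto intro!: derivative_eq_intros simp: field_simps)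
  from DERIV_chain'[OF this Dphi_has_derivative[of r "digit_point s n y"]]
  have "((\<lambda>y. \<gamma> ^ n * (1 / real b ^ Suc n) ^ r * Dphi r (digit_point s n y)) has_real_derivative
      \<gamma> ^ n * (1 / real b ^ Suc n) ^ r * (Dphi (Suc r) (digit_point s n y) * (1 / real b ^ Suc n)))
      (at y)"
    by (rule DERIV_cmult)
  then show ?thesis
    unfolding S_term_def[abs_def] by (simp add: field_simps)
qed

lemma abs_S_term_le: "\<bar>S_term r s n y\<bar> \<le> \<gamma> ^ n * Dphi_bound r"
proof -
  have "real b ^ Suc n \<ge> 1"
    using b_ge_2 by (intro one_le_power) auto
  then have "0 \<le> 1 / real b ^ Suc n" "1 / real b ^ Suc n \<le> 1"
    by auto
  then have "(1 / real b ^ Suc n) ^ r \<le> 1" "(1 / real b ^ Suc n) ^ r \<ge> 0"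
    by (simp_all add: power_le_one)
  then show ?thesis
    unfolding S_term_def abs_mult using gamma_pos abs_Dphi_le[of r]
    by (simp add: mult_mono' mult_le_cancel_left1 mult_le_one)
qed

lemma summable_S_term: "summable (\<lambda>n. S_term r s n y)"
  by (rule summable_comparison_test[OF _ summable_gamma_power[of "Dphi_bound r"]])
    (use abs_S_term_le in auto)

lemma abs_S_inf_deriv_le: "\<bar>S_inf_deriv r s y\<bar> \<le> Dphi_bound r / (1 - \<gamma>)"
  unfolding S_inf_deriv_def
  using norm_suminf_le[of "\<lambda>n. S_term r s n y" "\<lambda>n. \<gamma> ^ n * Dphi_bound r"] abs_S_term_le
    summable_gamma_power suminf_gamma_power
  by auto

lemma abs_S_fin_deriv_le: "\<bar>S_fin_deriv r s N y\<bar> \<le> Dphi_bound r / (1 - \<gamma>)"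
proof -
  have "\<bar>S_fin_deriv r s N y\<bar> \<le> (\<Sum>n<N. \<gamma> ^ n * Dphi_bound r)"
    unfolding S_fin_deriv_def by (rule order_trans[OF sum_abs sum_mono]) (rule abs_S_term_le)
  also have "\<dots> \<le> (\<Sum>n. \<gamma> ^ n * Dphi_bound r)"
    using gamma_pos Dphi_bound_pos[of r]
    by (intro sum_le_suminf[OF summable_gamma_power]) auto
  finally show ?thesis
    by (simp add: suminf_gamma_power)
qed

lemma S_inf_deriv_has_derivative:
  "(S_inf_deriv r s has_real_derivative S_inf_deriv (Suc r) s y) (at y)"
proof -
  have "((\<lambda>y. \<Sum>n. S_term r s n y) has_real_derivative (\<Sum>n. S_term (Suc r) s n y)) (at y)"
  proof (rule has_field_derivative_series'(2)[of UNIV])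
    show "uniformly_convergent_on UNIV (\<lambda>n y. \<Sum>i<n. S_term (Suc r) s i y)"
      by (rule Weierstrass_m_test'[OF _ summable_gamma_power[of "Dphi_bound (Suc r)"]])
        (use abs_S_term_le in auto)
  qed (auto intro: S_term_has_derivative summable_S_term)
  then show ?thesis
    unfolding S_inf_deriv_def[abs_def] by simp
qed

lemma S_fin_deriv_has_derivative:
  "(S_fin_deriv r s N has_real_derivative S_fin_deriv (Suc r) s N y) (at y)"
  unfolding S_fin_deriv_def[abs_def] by (rule DERIV_sum) (rule S_term_has_derivative)

lemma S_inf_deriv_minus_S_fin_deriv:
  "\<bar>S_inf_deriv r s y - S_fin_deriv r s N y\<bar> \<le> \<gamma> ^ N * Dphi_bound r / (1 - \<gamma>)"
proof -
  have "S_inf_deriv r s y - S_fin_deriv r s N y = (\<Sum>n. S_term r s (n + N) y)"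
    unfolding S_inf_deriv_def S_fin_deriv_def
    using suminf_split_initial_segment[OF summable_S_term[of r s y], of N] by simp
  also have "\<bar>\<dots>\<bar> \<le> (\<Sum>n. \<gamma> ^ n * (\<gamma> ^ N * Dphi_bound r))"
    using abs_S_term_le[of r s "_ + N" y]
    by (intro norm_suminf_le[of "\<lambda>n. S_term r s (n + N) y", simplified] summable_gamma_power)
      (simp add: power_add mult_ac)
  finally show ?thesis
    by (simp add: suminf_gamma_power)
qed

lemma S_inf_deriv_continuous:
  "continuous_on UNIV (\<lambda>p :: (nat \<Rightarrow> nat) \<times> real. S_inf_deriv r (fst p) (snd p))"
proof -
  have coordinate: "continuous_on UNIV (\<lambda>p :: (nat \<Rightarrow> nat) \<times> real. fst p i)" for i
    by (rule continuous_on_compose2[OF continuous_on_product_coordinates[of i]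
          continuous_on_fst[OF continuous_on_id]]) simp
  have digit: "continuous_on UNIV (\<lambda>p :: (nat \<Rightarrow> nat) \<times> real. real (fst p i))" for i
    by (rule continuous_on_compose2[OF Topological_Spaces.continuous_on_discrete[of UNIV real] coordinate]) simp
  have "continuous_on UNIV (\<lambda>p :: (nat \<Rightarrow> nat) \<times> real. S_term r (fst p) n (snd p))" for n
    unfolding S_term_def digit_point_def
    by (intro continuous_intros continuous_on_compose2[OF Dphi_continuous] digit) (use b_pos in auto)
  then have "\<forall>\<^sub>F n in sequentially. continuous_on UNIV
      (\<lambda>p :: (nat \<Rightarrow> nat) \<times> real. \<Sum>i<n. S_term r (fst p) i (snd p))"
    by (intro always_eventually allI continuous_on_sum)
  moreover have "uniform_limit UNIV (\<lambda>n p. \<Sum>i<n. S_term r (fst p) i (snd p))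
      (\<lambda>p. S_inf_deriv r (fst p) (snd p)) sequentially"
    unfolding S_inf_deriv_def
    by (rule Weierstrass_m_test[OF _ summable_gamma_power[of "Dphi_bound r"]])
      (use abs_S_term_le in auto)
  ultimately show ?thesis
    by (rule uniform_limit_theorem) simp
qed

end

section \<open>Nondegeneracy of the derivatives\<close>

lemma identity_theorem_Cauchy_local:
  fixes F :: "nat \<Rightarrow> real \<Rightarrow> real"
  assumes deriv: "\<And>r y. (F r has_real_derivative F (Suc r) y) (at y)"
    and bound: "\<And>r y. \<bar>F r y\<bar> \<le> C * fact r * R ^ r" and R: "R > 0"
    and zero: "\<And>r. F r y0 = 0" and x: "\<bar>x - y0\<bar> < 1 / (4 * R)"
  shows "F j x = 0"
proof (cases "x = y0")
  case True
  then show ?thesis using zero by simp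
next
  case False
  have C: "C \<ge> 0"
    using bound[of 0 y0] by simp
  define K where "K = C * fact j * (2 * R) ^ j"
  have Taylor_le: "\<bar>F j x\<bar> \<le> K * (1/2) ^ n" if "n > 0" for n
  proof -
    have "\<exists>t. (if x < y0 then x < t \<and> t < y0 else y0 < t \<and> t < x) \<and>
        F j x = (\<Sum>m<n. F (j + m) y0 / fact m * (x - y0) ^ m) + F (j + n) t / fact n * (x - y0) ^ n"
      by (rule Taylor[of n "\<lambda>m. F (j + m)" "F j" "min x y0" "max x y0" y0 x])
        (use deriv \<open>n > 0\<close> False in auto)
    then obtain t
      where "F j x = (\<Sum>m<n. F (j + m) y0 / fact m * (x - y0) ^ m) + F (j + n) t / fact n * (x - y0) ^ n"
      by blast
    then have "\<bar>F j x\<bar> = \<bar>F (j + n) t\<bar> / fact n * \<bar>x - y0\<bar> ^ n"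
      using zero by (simp add: abs_mult power_abs)
    also have "\<dots> \<le> C * fact (j + n) * R ^ (j + n) / fact n * (1 / (4 * R)) ^ n"
      using bound[of "j + n" t] x by (intro mult_mono divide_right_mono power_mono) auto
    also have "\<dots> \<le> C * (fact j * fact n * 2 ^ (j + n)) * R ^ (j + n) / fact n * (1 / (4 * R)) ^ n"
      using fact_add_le_pow2[of j n] C R by (intro mult_right_mono divide_right_mono mult_left_mono) auto
    also have "\<dots> = K * (1/2) ^ n"
      using R by (simp add: K_def power_add power_mult_distrib field_simps)
        (simp add: power_mult_distrib[symmetric])
    finally show ?thesis .
  qed
  have "(\<lambda>n. K * (1/2::real) ^ n) \<longlonglongrightarrow> K * 0"
    by (intro tendsto_intros) simp
  then have "(\<lambda>n. K * (1/2::real) ^ n) \<longlonglongrightarrow> 0"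
    by simp
  then have "\<bar>F j x\<bar> \<le> 0"
    by (rule LIMSEQ_le_const) (auto intro!: exI[of _ 1] Taylor_le)
  then show ?thesis
    by simp
qed

text \<open>The common zero set of all \<open>F r\<close> is closed by continuity and open by the local version,
  so it is all of \<open>\<real>\<close>.\<close>
lemma identity_theorem_Cauchy:
  fixes F :: "nat \<Rightarrow> real \<Rightarrow> real"
  assumes deriv: "\<And>r y. (F r has_real_derivative F (Suc r) y) (at y)"
    and bound: "\<And>r y. \<bar>F r y\<bar> \<le> C * fact r * R ^ r" and R: "R > 0"
    and zero: "\<And>r. F r y0 = 0"
  shows "F r x = 0"
proof -
  define Z where "Z = {y. \<forall>r. F r y = 0}"
  have "closed Z"
  proof -
    have "continuous_on UNIV (F r)" for r
      using deriv by (meson DERIV_isCont continuous_at_imp_continuous_on)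
    then have "closed {y. F r y = 0}" for r
      by (intro closed_Collect_eq continuous_intros)
    moreover have "Z = (\<Inter>r. {y. F r y = 0})"
      by (auto simp: Z_def)
    ultimately show ?thesis
      by auto
  qed
  moreover have "open Z"
  proof (rule openI)
    fix y assume "y \<in> Z"
    then have "ball y (1 / (4 * R)) \<subseteq> Z"
      using identity_theorem_Cauchy_local[OF deriv bound R] by (force simp: Z_def dist_real_def)
    then show "\<exists>e>0. ball y e \<subseteq> Z"
      using R by (intro exI[of _ "1 / (4 * R)"]) auto
  qed
  moreover have "y0 \<in> Z"
    using zero by (simp add: Z_def)
  ultimately have "Z = UNIV"
    using clopen[of Z] by blast
  then show ?thesis
    by (auto simp: Z_def)
qed

lemma compact_uniformly_nonvanishing:
  fixes f :: "nat \<Rightarrow> 'a::topological_space \<Rightarrow> real"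
  assumes K: "compact K" and cont: "\<And>r. continuous_on UNIV (f r)"
    and nonzero: "\<And>p. p \<in> K \<Longrightarrow> \<exists>r. f r p \<noteq> 0"
  shows "\<exists>m c. c > 0 \<and> (\<forall>p\<in>K. \<exists>r\<le>m. c \<le> \<bar>f r p\<bar>)"
proof (cases "K = {}")
  case True
  then show ?thesis by (intro exI[of _ 0] exI[of _ 1]) auto
next
  case False
  define g where "g m p = (\<Sum>r\<le>m. \<bar>f r p\<bar>)" for m p
  have g_cont: "continuous_on UNIV (g m)" for m
    unfolding g_def by (intro continuous_intros cont)
  have "K \<subseteq> (\<Union>m. {p. 0 < g m p})"
  proof
    fix p assume "p \<in> K"
    then obtain r where "f r p \<noteq> 0"
      using nonzero by blast
    then have "0 < g r p"
      unfolding g_def by (intro sum_pos2[of _ r]) auto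
    then show "p \<in> (\<Union>m. {p. 0 < g m p})"
      by blast
  qed
  moreover have "open {p. 0 < g m p}" for m
    using open_Collect_less[OF continuous_on_const g_cont] .
  ultimately obtain I where "finite I" and I: "K \<subseteq> (\<Union>m\<in>I. {p. 0 < g m p})"
    using compactE_image[OF K] by metis
  then obtain M where M: "\<forall>m\<in>I. m \<le> M"
    by (meson finite_nat_set_iff_bounded_le)
  have pos: "0 < g M p" if p: "p \<in> K" for p
  proof -
    obtain m where "m \<in> I" "0 < g m p"
      using I p by blast
    moreover have "g m p \<le> g M p"
      unfolding g_def using M \<open>m \<in> I\<close> by (intro sum_mono2) auto
    ultimately show ?thesis
      by linarith
  qed
  obtain p0 where p0: "p0 \<in> K" "\<And>p. p \<in> K \<Longrightarrow> g M p0 \<le> g M p"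
    using continuous_attains_inf[OF K False continuous_on_subset[OF g_cont]] by blast
  define c where "c = g M p0 / (real M + 1)"
  have "\<exists>r\<le>M. c \<le> \<bar>f r p\<bar>" if "p \<in> K" for p
  proof (rule ccontr)
    assume small: "\<not> ?thesis"
    have "g M p < (\<Sum>r\<le>M. c)"
      unfolding g_def by (intro sum_strict_mono) (use small in \<open>auto simp: not_le dest: leD\<close>)
    also have "\<dots> = g M p0"
      by (simp add: c_def add.commute)
    finally show False
      using p0(2)[OF that] by simp
  qed
  moreover have "c > 0"
    using pos[OF p0(1)] by (simp add: c_def)
  ultimately show ?thesis
    by blast
qed

locale weierstrass_series_H = weierstrass_series +
  assumes cond_H: "cond_H b \<gamma> \<phi>"
begin

definition distinct_heads :: "((nat \<Rightarrow> nat) \<times> (nat \<Rightarrow> nat) \<times> real) set" where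
  "distinct_heads = {(s, t, y). s \<in> Sigma_b b \<and> t \<in> Sigma_b b \<and> s 0 \<noteq> t 0 \<and> y \<in> {0..1}}"

lemma compact_distinct_heads: "compact distinct_heads"
proof -
  define Sigma_head :: "nat \<Rightarrow> (nat \<Rightarrow> nat) set"
    where "Sigma_head i = PiE UNIV (\<lambda>k. if k = 0 then {i} else {..<b})" for i
  have compact_head: "compact (Sigma_head i)" for i
  proof -
    have "compactin (product_topology (\<lambda>_. euclidean) UNIV) (Sigma_head i)"
      unfolding Sigma_head_def compactin_PiE by (auto intro: finite_imp_compact)
    then show ?thesis
      by (simp add: euclidean_product_topology)
  qed
  have head: "s \<in> Sigma_head i \<longleftrightarrow> s 0 = i \<and> (\<forall>k>0. s k < b)" for s i
    unfolding Sigma_head_def PiE_iff by (auto split: if_splits)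
  have all_digits: "\<forall>k. s k < b" if "s \<in> Sigma_head i" "i < b" for s i
    using that unfolding head by (metis gr0I)
  have eq: "distinct_heads
      = (\<Union>i\<in>{..<b}. \<Union>j\<in>{..<b} - {i}. Sigma_head i \<times> Sigma_head j \<times> {0..1::real})"
  proof (intro equalityI subsetI)
    fix p assume "p \<in> distinct_heads"
    then obtain s t y where p: "p = (s, t, y)" and st: "s \<in> Sigma_b b" "t \<in> Sigma_b b"
      "s 0 \<noteq> t 0" "y \<in> {0..1}"
      unfolding distinct_heads_def by blast
    then have "s \<in> Sigma_head (s 0)" "t \<in> Sigma_head (t 0)" "s 0 < b" "t 0 < b"
      by (auto simp: head Sigma_b_def)
    with st show "p \<in> (\<Union>i\<in>{..<b}. \<Union>j\<in>{..<b} - {i}. Sigma_head i \<times> Sigma_head j \<times> {0..1::real})"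
      unfolding p by (intro UN_I[of "s 0"] UN_I[of "t 0"]) auto
  next
    fix p assume "p \<in> (\<Union>i\<in>{..<b}. \<Union>j\<in>{..<b} - {i}. Sigma_head i \<times> Sigma_head j \<times> {0..1::real})"
    then obtain i j s t y where "p = (s, t, y)" "i < b" "j < b" "i \<noteq> j"
      "s \<in> Sigma_head i" "t \<in> Sigma_head j" "y \<in> {0..1}"
      by blast
    then show "p \<in> distinct_heads"
      using all_digits by (auto simp: distinct_heads_def Sigma_b_def head)
  qed
  show ?thesis
    unfolding eq by (intro compact_UN compact_Times compact_head compact_Icc) auto
qed

lemma S_inf_derivs_differ:
  assumes "(s, t, y) \<in> distinct_heads"
  shows "\<exists>r. S_inf_deriv r s y \<noteq> S_inf_deriv r t y"
proof (rule ccontr)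
  assume all_equal: "\<not> ?thesis"
  define F where "F r x = S_inf_deriv r s x - S_inf_deriv r t x" for r x
  have "F 0 x = 0" for x
  proof (rule identity_theorem_Cauchy[where F = F])
    show "(F r has_real_derivative F (Suc r) x) (at x)" for r x
      unfolding F_def[abs_def] by (intro DERIV_diff S_inf_deriv_has_derivative)
    show "\<bar>F r x\<bar> \<le> (2 * fst Cauchy_constants / (1 - \<gamma>)) * fact r * snd Cauchy_constants ^ r"
      for r x
    proof -
      have "\<bar>F r x\<bar> \<le> 2 * Dphi_bound r / (1 - \<gamma>)"
        using abs_S_inf_deriv_le[of r s x] abs_S_inf_deriv_le[of r t x] unfolding F_def by linarith
      then show ?thesis
        by (simp add: Dphi_bound_def mult_ac)
    qed
    show "F r y = 0" for r
      using all_equal by (simp add: F_def)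
  qed (use Cauchy_constants in auto)
  moreover have "s \<in> Sigma_b b" "t \<in> Sigma_b b" "s \<noteq> t"
    using assms by (auto simp: distinct_heads_def)
  then obtain x where "S_inf b \<gamma> \<phi> x t - S_inf b \<gamma> \<phi> x s \<noteq> 0"
    using cond_H unfolding cond_H_def by blast
  ultimately show False
    unfolding F_def S_inf_eq by simp
qed

lemma S_inf_derivs_nondegenerate:
  "\<exists>m c. c > 0 \<and> (\<forall>s t y. (s, t, y) \<in> distinct_heads \<longrightarrow>
      (\<exists>r\<le>m. c \<le> \<bar>S_inf_deriv r s y - S_inf_deriv r t y\<bar>))"
proof -
  define f where "f r p = S_inf_deriv r (fst p) (snd (snd p)) - S_inf_deriv r (fst (snd p)) (snd (snd p))"
    for r and p :: "(nat \<Rightarrow> nat) \<times> (nat \<Rightarrow> nat) \<times> real"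
  have "continuous_on UNIV (f r)" for r
    unfolding f_def
    by (intro continuous_on_diff
        continuous_on_compose2[OF S_inf_deriv_continuous, of UNIV "\<lambda>p. (fst p, snd (snd p))", simplified]
        continuous_on_compose2[OF S_inf_deriv_continuous, of UNIV "\<lambda>p. (fst (snd p), snd (snd p))", simplified]
        continuous_intros)
  moreover have "\<exists>r. f r p \<noteq> 0" if "p \<in> distinct_heads" for p
    using S_inf_derivs_differ[of "fst p" "fst (snd p)" "snd (snd p)"] that by (simp add: f_def)
  ultimately obtain m c where "c > 0" "\<forall>p\<in>distinct_heads. \<exists>r\<le>m. c \<le> \<bar>f r p\<bar>"
    using compact_uniformly_nonvanishing[OF compact_distinct_heads] by blast
  then show ?thesis
    unfolding f_def by fastforce
qed

text \<open>Truncating at a level \<open>N \<ge> L\<close> costs at most half of the lower bound, uniformly.\<close>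
lemma S_fin_derivs_nondegenerate:
  "\<exists>m c L. c > 0 \<and> (\<forall>s t N y. (\<forall>i<N. s i < b) \<and> (\<forall>i<N. t i < b) \<and> s 0 \<noteq> t 0 \<and>
      L \<le> N \<and> y \<in> {0..1} \<longrightarrow> (\<exists>r\<le>m. c \<le> \<bar>S_fin_deriv r s N y - S_fin_deriv r t N y\<bar>))"
proof -
  obtain m c where c: "c > 0"
    and nondeg: "\<And>s t y. (s, t, y) \<in> distinct_heads \<Longrightarrow>
      \<exists>r\<le>m. c \<le> \<bar>S_inf_deriv r s y - S_inf_deriv r t y\<bar>"
    using S_inf_derivs_nondegenerate by blast
  define B where "B = Dphi_bound m / (1 - \<gamma>)"
  have B: "B > 0"
    using Dphi_bound_pos gamma_less_1 by (simp add: B_def)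
  obtain L0 where L0: "\<gamma> ^ L0 < c / (4 * B)"
    using real_arch_pow_inv[of "c / (4 * B)" \<gamma>] c B gamma_less_1 by auto
  have truncated: "\<exists>r\<le>m. c / 2 \<le> \<bar>S_fin_deriv r s N y - S_fin_deriv r t N y\<bar>"
    if s: "\<forall>i<N. s i < b" and t: "\<forall>i<N. t i < b" and head: "s 0 \<noteq> t 0"
      and N: "Suc L0 \<le> N" and y: "y \<in> {0..1}" for s t N y
  proof -
    define s' where "s' i = (if i < N then s i else 0)" for i
    define t' where "t' i = (if i < N then t i else 0)" for i
    have "s' \<in> Sigma_b b" "t' \<in> Sigma_b b"
      using s t b_ge_2 by (auto simp: Sigma_b_def s'_def t'_def)
    moreover have "s' 0 \<noteq> t' 0"
      using head N by (simp add: s'_def t'_def)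
    ultimately have "(s', t', y) \<in> distinct_heads"
      using y by (simp add: distinct_heads_def)
    then obtain r where r: "r \<le> m" "c \<le> \<bar>S_inf_deriv r s' y - S_inf_deriv r t' y\<bar>"
      using nondeg by blast
    have truncate: "\<bar>S_inf_deriv r u y - S_fin_deriv r u N y\<bar> \<le> c / 4" for u
    proof -
      have "\<gamma> ^ N * Dphi_bound r \<le> \<gamma> ^ L0 * Dphi_bound m"
        using N gamma_pos gamma_less_1 Dphi_bound_mono[OF r(1)] Dphi_bound_pos[of r]
        by (intro mult_mono power_decreasing) auto
      then have "\<gamma> ^ N * Dphi_bound r / (1 - \<gamma>) \<le> \<gamma> ^ L0 * B"
        using gamma_less_1 by (simp add: B_def divide_right_mono)
      also have "\<dots> \<le> c / 4"
        using L0 B by (simp add: field_simps)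
      finally show ?thesis
        using S_inf_deriv_minus_S_fin_deriv[of r u y N] by linarith
    qed
    have "S_fin_deriv r s N y = S_fin_deriv r s' N y"
      by (rule S_fin_deriv_cong) (simp add: s'_def)
    moreover have "S_fin_deriv r t N y = S_fin_deriv r t' N y"
      by (rule S_fin_deriv_cong) (simp add: t'_def)
    ultimately have "c \<le> \<bar>S_fin_deriv r s N y - S_fin_deriv r t N y\<bar> + c / 4 + c / 4"
      using r(2) truncate[of s'] truncate[of t'] by linarith
    then show ?thesis
      using r(1) by (intro exI[of _ r]) auto
  qed
  then show ?thesis
    using c by (intro exI[of _ m] exI[of _ "c / 2"] exI[of _ "Suc L0"]) auto
qed

end

section \<open>Sublevel set estimates\<close>

definition sublevel :: "(real \<Rightarrow> real) \<Rightarrow> real set \<Rightarrow> real \<Rightarrow> real set" where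
  "sublevel f J \<delta> = {y \<in> J. \<bar>f y\<bar> < \<delta>}"

lemma sets_sublevel:
  assumes "continuous_on UNIV f" "is_interval J"
  shows "sublevel f J \<delta> \<in> sets lborel"
proof -
  have "open {y. \<bar>f y\<bar> < \<delta>}"
    by (intro open_Collect_less continuous_intros assms(1))
  then have "J \<inter> {y. \<bar>f y\<bar> < \<delta>} \<in> sets lborel"
    using real_interval_borel_measurable[OF assms(2)] by (auto intro: borel_open)
  then show ?thesis
    by (simp add: sublevel_def Int_def)
qed

lemma measure_mono_bounded:
  fixes A B :: "real set"
  assumes "A \<subseteq> B" "A \<in> sets lborel" "B \<in> sets lborel" "B \<subseteq> {a..b}"
  shows "measure lborel A \<le> measure lborel B"
  by (rule measure_mono_fmeasurable[OF assms(1,2)])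
    (use assms(3,4) in \<open>auto intro: fmeasurableI2[of "{a..b}"] simp: fmeasurable_compact\<close>)

lemma measure_le_1_if_subset_unit:
  fixes A :: "real set"
  assumes "A \<subseteq> {0..1}" "A \<in> sets lborel"
  shows "measure lborel A \<le> 1"
  using measure_mono_bounded[OF assms, of 0 1] by simp

lemma interval_MVT:
  fixes f f' :: "real \<Rightarrow> real"
  assumes deriv: "\<And>y. (f has_real_derivative f' y) (at y)"
    and J: "is_interval J" "x \<in> J" "y \<in> J"
  obtains z where "z \<in> J" "f x - f y = (x - y) * f' z"
proof -
  have "\<exists>z\<in>J. f v - f u = (v - u) * f' z" if "u \<in> J" "v \<in> J" "u < v" for u v
  proof -
    obtain z where z: "u < z" "z < v" "f v - f u = (v - u) * f' z"
      using MVT2[OF \<open>u < v\<close>, of f f'] deriv by blast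
    moreover have "z \<in> J"
      using J(1) that z unfolding is_interval_1 by (meson less_imp_le)
    ultimately show ?thesis
      by blast
  qed
  from this[of y x] this[of x y] J(2,3) that show thesis
    by (cases x y rule: linorder_cases) (force simp: algebra_simps)+
qed

lemma sublevel_cover_step:
  fixes g g' :: "real \<Rightarrow> real"
  assumes deriv: "\<And>y. (g has_real_derivative g' y) (at y)" and J: "is_interval J"
    and lower: "\<And>y. y \<in> J \<Longrightarrow> c \<le> \<bar>g' y\<bar>" and c: "c > 0"
  obtains J1 J2 y0 where "is_interval J1" "is_interval J2" "J1 \<subseteq> J" "J2 \<subseteq> J"
    and "\<And>y. y \<in> J1 \<union> J2 \<Longrightarrow> \<beta> \<le> \<bar>g y\<bar>"
    and "J \<subseteq> J1 \<union> J2 \<union> {y0 - 2 * \<beta> / c .. y0 + 2 * \<beta> / c}"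
proof (cases "\<exists>y0\<in>J. \<bar>g y0\<bar> < \<beta>")
  case False
  then show thesis
    using that[of J "{}" 0] J by (auto simp: not_less)
next
  case True
  then obtain y0 where y0: "y0 \<in> J" "\<bar>g y0\<bar> < \<beta>"
    by blast
  define d where "d = 2 * \<beta> / c"
  have close: "\<bar>y - y0\<bar> \<le> d" if y: "y \<in> J" "\<bar>g y\<bar> < \<beta>" for y
  proof -
    obtain z where "z \<in> J" "g y - g y0 = (y - y0) * g' z"
      using interval_MVT[OF deriv J y(1) y0(1)] by blast
    then have "c * \<bar>y - y0\<bar> \<le> \<bar>g y - g y0\<bar>"
      using lower[of z] by (simp add: abs_mult mult.commute mult_right_mono)
    also have "\<dots> < 2 * \<beta>"
      using y(2) y0(2) by linarith
    finally show ?thesis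
      using c by (simp add: d_def field_simps)
  qed
  show thesis
  proof (rule that[of "J \<inter> {..<y0 - d}" "J \<inter> {y0 + d<..}" y0])
    show "is_interval (J \<inter> {..<y0 - d})" "is_interval (J \<inter> {y0 + d<..})"
      using J by (auto intro!: is_interval_Int simp: is_interval_1)
    show "\<beta> \<le> \<bar>g y\<bar>" if "y \<in> J \<inter> {..<y0 - d} \<union> J \<inter> {y0 + d<..}" for y
      using close[of y] that by force
  qed (auto simp: d_def)
qed

lemma powr_half_power_mono:
  fixes t :: real
  assumes "0 < t" "t \<le> 1" "r \<le> m"
  shows "t powr ((1/2) ^ r) \<le> t powr ((1/2) ^ m)"
  by (rule powr_mono') (use assms in \<open>auto intro: power_decreasing\<close>)

lemma measure_sublevel_le_cover:
  fixes f :: "real \<Rightarrow> real"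
  assumes f: "continuous_on UNIV f" and intervals: "is_interval J" "is_interval J1" "is_interval J2"
    and unit: "J1 \<union> J2 \<subseteq> {0..1}" and cover: "J \<subseteq> J1 \<union> J2 \<union> {y0 - d .. y0 + d}" and d: "d \<ge> 0"
  shows "measure lborel (sublevel f J \<delta>)
    \<le> measure lborel (sublevel f J1 \<delta>) + measure lborel (sublevel f J2 \<delta>) + 2 * d"
proof -
  let ?I = "{y0 - d .. y0 + d}"
  have sets: "sublevel f J1 \<delta> \<in> sets lborel" "sublevel f J2 \<delta> \<in> sets lborel"
    by (rule sets_sublevel[OF f intervals(2)], rule sets_sublevel[OF f intervals(3)])
  have "measure lborel (sublevel f J \<delta>) \<le> measure lborel (sublevel f J1 \<delta> \<union> sublevel f J2 \<delta> \<union> ?I)"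
  proof (rule measure_mono_bounded)
    show "sublevel f J \<delta> \<subseteq> sublevel f J1 \<delta> \<union> sublevel f J2 \<delta> \<union> ?I"
      using cover by (auto simp: sublevel_def)
    show "sublevel f J1 \<delta> \<union> sublevel f J2 \<delta> \<union> ?I \<subseteq> {min 0 (y0 - d) .. max 1 (y0 + d)}"
    proof
      fix x assume "x \<in> sublevel f J1 \<delta> \<union> sublevel f J2 \<delta> \<union> ?I"
      then have "x \<in> {0..1} \<or> x \<in> ?I"
        using unit by (auto simp: sublevel_def)
      then show "x \<in> {min 0 (y0 - d) .. max 1 (y0 + d)}"
        by auto
    qed
  qed (use sets sets_sublevel[OF f intervals(1)] in auto)
  also have "\<dots> \<le> measure lborel (sublevel f J1 \<delta>) + measure lborel (sublevel f J2 \<delta>) + measure lborel ?I"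
    using sets by (intro order_trans[OF measure_Un_le] add_mono measure_Un_le) auto
  finally show ?thesis
    using d by simp
qed

lemma one_le_mult_powr:
  fixes A t e :: real
  assumes "1 \<le> A" "1 \<le> t" "0 \<le> e"
  shows "1 \<le> A * t powr e"
proof -
  have "1 \<le> t powr e"
    using assms(2,3) by (rule ge_one_powr_ge_zero)
  then show ?thesis
    using assms(1) by (metis mult_mono' mult_1 zero_le_one)
qed

text \<open>In the induction step, \<open>\<bar>F r\<bar> < c \<surd>t\<close> only on
  an interval of length \<open>4 \<surd>t\<close>; elsewhere the induction hypothesis applies with \<open>c \<surd>t\<close>, which
  halves the exponent.\<close>
lemma measure_sublevel_interval:
  fixes F :: "nat \<Rightarrow> real \<Rightarrow> real"
  assumes deriv: "\<And>j y. (F j has_real_derivative F (Suc j) y) (at y)"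
    and "is_interval J" "J \<subseteq> {0..1}" "c > 0" "\<delta> > 0" "\<And>y. y \<in> J \<Longrightarrow> c \<le> \<bar>F r y\<bar>"
  shows "measure lborel (sublevel (F 0) J \<delta>) \<le> 6 ^ r * (\<delta> / c) powr ((1/2) ^ r)"
  using assms(2-)
proof (induction r arbitrary: J c)
  have cont: "continuous_on UNIV (F j)" for j
    using deriv by (meson DERIV_isCont continuous_at_imp_continuous_on)
  have trivial: "measure lborel (sublevel (F 0) J \<delta>) \<le> 1" if "is_interval J" "J \<subseteq> {0..1}" for J
    using that by (intro measure_le_1_if_subset_unit sets_sublevel cont) (auto simp: sublevel_def)
  {
    case 0
    show ?case
    proof (cases "\<delta> \<le> c")
      case True
      then have "sublevel (F 0) J \<delta> = {}"
        using 0 by (force simp: sublevel_def)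
      then show ?thesis
        by simp
    next
      case False
      then have "1 \<le> \<delta> / c"
        using "0.prems"(3) by simp
      then have "measure lborel (sublevel (F 0) J \<delta>) \<le> \<delta> / c"
        using trivial[OF "0.prems"(1,2)] by linarith
      then show ?thesis
        using "0.prems"(3,4) by simp
    qed
  next
    case (Suc r)
    define t where "t = \<delta> / c"
    have t: "t > 0"
      using Suc.prems by (simp add: t_def)
    show ?case
    proof (cases "t \<ge> 1")
      case True
      then have "1 \<le> (6::real) ^ Suc r * t powr ((1/2) ^ Suc r)"
        by (intro one_le_mult_powr one_le_power) auto
      then show ?thesis
        using trivial[OF Suc.prems(1,2)] by (simp add: t_def)
    next
      case False
      define \<beta> where "\<beta> = c * sqrt t"
      have \<beta>: "\<beta> > 0" "\<delta> / \<beta> = sqrt t" "2 * \<beta> / c = 2 * sqrt t"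
        using Suc.prems t by (auto simp: \<beta>_def t_def field_simps)
      obtain J1 J2 y0 where J12: "is_interval J1" "is_interval J2" "J1 \<subseteq> J" "J2 \<subseteq> J"
        and big: "\<And>y. y \<in> J1 \<union> J2 \<Longrightarrow> \<beta> \<le> \<bar>F r y\<bar>"
        and cover: "J \<subseteq> J1 \<union> J2 \<union> {y0 - 2 * sqrt t .. y0 + 2 * sqrt t}"
        using sublevel_cover_step[OF deriv Suc.prems(1) Suc.prems(5) Suc.prems(3), of \<beta>] \<beta>(3)
        by metis
      have IH: "measure lborel (sublevel (F 0) J' \<delta>) \<le> 6 ^ r * t powr ((1/2) ^ Suc r)"
        if "is_interval J'" "J' \<subseteq> J" "\<And>y. y \<in> J' \<Longrightarrow> \<beta> \<le> \<bar>F r y\<bar>" for J'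
      proof -
        have "sqrt t powr ((1/2) ^ r) = t powr ((1/2) ^ Suc r)"
          using t by (simp add: powr_half_sqrt[symmetric] powr_powr)
        then show ?thesis
          using Suc.IH[of J' \<beta>] that Suc.prems \<beta> by auto
      qed
      have "measure lborel (sublevel (F 0) J \<delta>)
          \<le> measure lborel (sublevel (F 0) J1 \<delta>) + measure lborel (sublevel (F 0) J2 \<delta>) + 2 * (2 * sqrt t)"
        using J12 Suc.prems(1,2) cover t by (intro measure_sublevel_le_cover cont) auto
      also have "\<dots> \<le> 6 ^ r * t powr ((1/2) ^ Suc r) + 6 ^ r * t powr ((1/2) ^ Suc r) + 4 * sqrt t"
        using J12 big t by (intro add_mono IH) auto
      also have "\<dots> \<le> 6 ^ Suc r * t powr ((1/2) ^ Suc r)"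
      proof -
        have "sqrt t \<le> t powr ((1/2) ^ Suc r)"
          using powr_half_power_mono[of t 1 "Suc r"] t False by (simp add: powr_half_sqrt)
        moreover have "t powr ((1/2) ^ Suc r) \<le> 6 ^ r * t powr ((1/2) ^ Suc r)"
          using mult_right_mono[OF one_le_power[of "6::real" r]] by simp
        ultimately show ?thesis
          by simp
      qed
      finally show ?thesis
        by (simp add: t_def)
    qed
  }
qed

lemma unit_interval_cover:
  fixes y :: real
  assumes "n > 0" "y \<in> {0..1}"
  obtains i where "i < n" "y \<in> {real i / real n .. (real i + 1) / real n}"
proof (cases "y = 1")
  case True
  then show thesis
    using assms that[of "n - 1"] by (auto simp: field_simps of_nat_diff)
next
  case False
  define i where "i = nat \<lfloor>y * n\<rfloor>"
  have floor: "real i \<le> y * n" "y * n < real i + 1"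
    using assms by (auto simp: i_def)
  moreover have "y * n < n"
    using False assms by simp
  ultimately have "i < n"
    by linarith
  moreover have "real i / n \<le> y" "y \<le> (real i + 1) / n"
    using floor assms by (auto simp: field_simps)
  ultimately show thesis
    using that by auto
qed

lemma lower_bound_nearby:
  fixes f f' :: "real \<Rightarrow> real"
  assumes deriv: "\<And>y. (f has_real_derivative f' y) (at y)" and J: "is_interval J" "y0 \<in> J" "y \<in> J"
    and bound: "\<And>z. z \<in> J \<Longrightarrow> \<bar>f' z\<bar> \<le> K" and close: "\<bar>y - y0\<bar> * K \<le> c / 2"
    and lower: "c \<le> \<bar>f y0\<bar>"
  shows "c / 2 \<le> \<bar>f y\<bar>"
proof -
  obtain z where "z \<in> J" "f y - f y0 = (y - y0) * f' z"
    using interval_MVT[OF deriv J(1,3,2)] by blast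
  then have "\<bar>f y - f y0\<bar> \<le> \<bar>y - y0\<bar> * K"
    using bound[of z] by (simp add: abs_mult mult_left_mono)
  then show ?thesis
    using close lower by linarith
qed

lemma measure_sublevel_unit_interval:
  fixes F :: "nat \<Rightarrow> real \<Rightarrow> real"
  assumes deriv: "\<And>j y. (F j has_real_derivative F (Suc j) y) (at y)"
    and K: "K > 0" "\<And>r y. r \<le> m \<Longrightarrow> y \<in> {0..1} \<Longrightarrow> \<bar>F (Suc r) y\<bar> \<le> K"
    and nondeg: "\<And>y. y \<in> {0..1} \<Longrightarrow> \<exists>r\<le>m. c \<le> \<bar>F r y\<bar>"
    and c: "c > 0" and \<delta>: "\<delta> > 0"
  shows "measure lborel (sublevel (F 0) {0..1} \<delta>)
    \<le> real (nat \<lceil>2 * K / c\<rceil> + 1) * 6 ^ m * (2 * \<delta> / c) powr ((1/2) ^ m)"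
proof -
  define n where "n = nat \<lceil>2 * K / c\<rceil> + 1"
  have n: "n > 0" "2 * K / c \<le> real n"
    unfolding n_def by (auto simp: of_nat_nat) linarith
  define P where "P i = {real i / real n .. (real i + 1) / real n}" for i
  define t where "t = 2 * \<delta> / c"
  have t: "t > 0"
    using c \<delta> by (simp add: t_def)
  have cont: "continuous_on UNIV (F j)" for j
    using deriv by (meson DERIV_isCont continuous_at_imp_continuous_on)
  have sets: "sublevel (F 0) J \<delta> \<in> sets lborel" if "is_interval J" for J
    using sets_sublevel[OF cont that] .
  show ?thesis
  proof (cases "t \<ge> 1")
    case True
    have "1 * 1 \<le> real n * 6 ^ m"
      using n(1) by (intro mult_mono one_le_power) auto
    then have "1 \<le> real n * 6 ^ m * t powr ((1/2) ^ m)"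
      using True by (intro one_le_mult_powr) auto
    moreover have "measure lborel (sublevel (F 0) {0..1} \<delta>) \<le> 1"
      by (intro measure_le_1_if_subset_unit sets) (auto simp: sublevel_def is_interval_cc)
    ultimately show ?thesis
      by (simp add: t_def n_def)
  next
    case False
    have P01: "P i \<subseteq> {0..1}" if "i < n" for i
      using that n unfolding P_def by (auto simp: field_simps)
    have piece: "measure lborel (sublevel (F 0) (P i) \<delta>) \<le> 6 ^ m * t powr ((1/2) ^ m)"
      if i: "i < n" for i
    proof -
      define y0 where "y0 = real i / real n"
      have y0: "y0 \<in> P i" "y0 \<in> {0..1}"
        using P01[OF i] n unfolding P_def y0_def by (auto simp: field_simps)
      obtain r where r: "r \<le> m" "c \<le> \<bar>F r y0\<bar>"
        using nondeg[OF y0(2)] by blast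
      have lower: "c / 2 \<le> \<bar>F r y\<bar>" if y: "y \<in> P i" for y
      proof (rule lower_bound_nearby[OF deriv _ y0(1) y _ _ r(2)])
        show "\<bar>F (Suc r) z\<bar> \<le> K" if "z \<in> P i" for z
          using K(2)[OF r(1)] that P01[OF i] by auto
        have "y0 \<le> y" "y \<le> y0 + 1 / real n"
          using y unfolding P_def y0_def by (auto simp: add_divide_distrib)
        then have "\<bar>y - y0\<bar> * K \<le> 1 / real n * K"
          using K(1) by (intro mult_right_mono) auto
        also have "\<dots> \<le> c / 2"
          using n c K by (simp add: field_simps)
        finally show "\<bar>y - y0\<bar> * K \<le> c / 2" .
      qed (simp add: P_def is_interval_cc)
      have "measure lborel (sublevel (F 0) (P i) \<delta>) \<le> 6 ^ r * (\<delta> / (c / 2)) powr ((1/2) ^ r)"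
        by (rule measure_sublevel_interval[OF deriv _ P01[OF i] _ \<delta> lower])
          (use c in \<open>auto simp: P_def is_interval_cc\<close>)
      also have "\<dots> = 6 ^ r * t powr ((1/2) ^ r)"
        by (simp add: t_def mult.commute)
      also have "\<dots> \<le> 6 ^ m * t powr ((1/2) ^ m)"
        using r(1) t False by (intro mult_mono power_increasing powr_half_power_mono) auto
      finally show ?thesis .
    qed
    have cover: "sublevel (F 0) {0..1} \<delta> \<subseteq> (\<Union>i<n. sublevel (F 0) (P i) \<delta>)"
    proof
      fix y assume "y \<in> sublevel (F 0) {0..1} \<delta>"
      moreover from this obtain i where "i < n" "y \<in> P i"
        using unit_interval_cover[OF n(1)] unfolding P_def sublevel_def by blast
      ultimately show "y \<in> (\<Union>i<n. sublevel (F 0) (P i) \<delta>)"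
        by (auto simp: sublevel_def)
    qed
    have pieces_sets: "sublevel (F 0) (P i) \<delta> \<in> sets lborel" for i
      unfolding P_def by (rule sets) (rule is_interval_cc)
    have "(\<Union>i<n. sublevel (F 0) (P i) \<delta>) \<subseteq> {0..1}"
      unfolding sublevel_def using P01 by blast
    then have "measure lborel (sublevel (F 0) {0..1} \<delta>) \<le> measure lborel (\<Union>i<n. sublevel (F 0) (P i) \<delta>)"
      using sets[OF is_interval_cc] pieces_sets by (intro measure_mono_bounded[OF cover]) auto
    also have "\<dots> \<le> (\<Sum>i<n. measure lborel (sublevel (F 0) (P i) \<delta>))"
      using pieces_sets by (intro measure_UNION_le) auto
    also have "\<dots> \<le> (\<Sum>i<n. 6 ^ m * t powr ((1/2) ^ m))"
      by (intro sum_mono piece) simp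
    finally show ?thesis
      by (simp add: t_def n_def)
  qed
qed

lemma measure_affine_preimage_le:
  fixes t c :: real
  assumes c: "c > 0" and B: "B \<in> sets lborel" "B \<subseteq> {0..1}"
  shows "measure lborel {x\<in>{0..1}. t + c * x \<in> B} \<le> measure lborel B / c"
proof -
  have [measurable]: "B \<in> sets borel"
    using B by simp
  define A where "A = {x. t + c * x \<in> B}"
  have A_sets: "A \<in> sets lborel"
    unfolding A_def by measurable
  have "(\<integral>\<^sup>+x. indicator B x \<partial>lborel) = ennreal \<bar>c\<bar> * (\<integral>\<^sup>+x. indicator B (t + c * x) \<partial>lborel)"
    by (rule nn_integral_real_affine) (use c in auto)
  moreover have "(\<integral>\<^sup>+x. indicator B x \<partial>lborel) = emeasure lborel B"
    using B by (simp add: nn_integral_indicator)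
  moreover have "(\<lambda>x. indicator B (t + c * x) :: ennreal) = indicator A"
    unfolding A_def by (auto simp: indicator_def)
  moreover have "(\<integral>\<^sup>+x. indicator A x \<partial>lborel) = emeasure lborel A"
    using A_sets by (simp add: nn_integral_indicator)
  ultimately have "emeasure lborel B = ennreal c * emeasure lborel A"
    using c by simp
  moreover have "emeasure lborel B = ennreal (measure lborel B)"
    by (rule emeasure_eq_measure2, rule fmeasurableI2[of "{0..1}"])
      (use B in \<open>auto simp: fmeasurable_compact\<close>)
  ultimately have "ennreal (1 / c) * (ennreal c * emeasure lborel A)
      = ennreal (1 / c) * ennreal (measure lborel B)"
    by simp
  then have A_measure: "emeasure lborel A = ennreal (measure lborel B / c)"
    using c by (simp add: ennreal_mult'[symmetric] mult.assoc[symmetric] divide_ennreal)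
  then have "A \<in> fmeasurable lborel"
    using A_sets by (auto simp: fmeasurable_def)
  then have "measure lborel {x\<in>{0..1}. t + c * x \<in> B} \<le> measure lborel A"
    by (rule measure_mono_fmeasurable[rotated 2]) (auto simp: A_def intro: sets.Int[OF _ A_sets])
  also have "\<dots> = measure lborel B / c"
    using A_measure c by (simp add: measure_def)
  finally show ?thesis .
qed

section \<open>Words and prefixes\<close>

lemma sum_lessThan_add: "(\<Sum>n<k + (M::nat). f n) = (\<Sum>n<k. f n) + (\<Sum>j<M. f (k + j))"
  by (induction M) (auto simp: add_ac)

lemma words_eq_lists: "words b m = {xs. set xs \<subseteq> {..<b} \<and> length xs = m}"
  unfolding words_def by auto

lemma finite_words: "finite (words b m)"
  unfolding words_eq_lists by (rule finite_lists_length_eq) simp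

lemma card_words: "card (words b m) = b ^ m"
  unfolding words_eq_lists by (subst card_lists_length_eq) simp_all

lemma equal_length_first_difference:
  assumes "length xs = length ys" "xs \<noteq> ys"
  obtains p x y u v where "xs = p @ x # u" "ys = p @ y # v" "x \<noteq> y"
proof -
  have "xs \<parallel> ys"
    using assms by (intro parallelI) (auto simp: prefix_def)
  then show thesis
    using parallel_decomp that by blast
qed

lemma words_first_difference:
  assumes js: "js \<in> words b (N - l)" "js' \<in> words b (N - l)" and w: "w \<in> words b l"
    and "l < N" "js \<noteq> js'"
  obtains p j u j' u' where "length p < N - l" "p \<in> words b (length p)"
    "j # u \<in> words b (N - length p)" "j' # u' \<in> words b (N - length p)" "j \<noteq> j'"
    "js @ w = p @ j # u" "js' @ w = p @ j' # u'"
proof -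
  have lengths: "length js = N - l" "length js' = N - l" "length w = l"
    using js w by (auto simp: words_def)
  then have "length (js @ w) = length (js' @ w)" "js @ w \<noteq> js' @ w"
    using \<open>js \<noteq> js'\<close> by auto
  then obtain p j j' u u' where U: "js @ w = p @ j # u" and V: "js' @ w = p @ j' # u'" and "j \<noteq> j'"
    by (rule equal_length_first_difference)
  have short: "length p < N - l"
  proof (rule ccontr)
    assume "\<not> length p < N - l"
    then have "(js @ w) ! length p = (js' @ w) ! length p"
      using lengths by (simp add: nth_append)
    then show False
      using U V \<open>j \<noteq> j'\<close> by simp
  qed
  have "set (js @ w) \<subseteq> {..<b}" "set (js' @ w) \<subseteq> {..<b}"
    using js w by (auto simp: words_def)
  then have "set (p @ j # u) \<subseteq> {..<b}" "set (p @ j' # u') \<subseteq> {..<b}"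
    unfolding U V .
  moreover have "length p + Suc (length u) = N" "length p + Suc (length u') = N"
    using arg_cong[OF U, of length] arg_cong[OF V, of length] lengths \<open>l < N\<close> by simp_all
  ultimately show thesis
    using short \<open>j \<noteq> j'\<close> by (intro that[OF _ _ _ _ _ U V]) (auto simp: words_def)
qed

context weierstrass_series
begin

text \<open>After a prefix \<open>p = j\<^sub>1 \<dots> j\<^sub>k\<close>, the remaining terms of \<open>S(x, p w)\<close> are those of
  \<open>S(prefix_point p x, w)\<close>, scaled by \<open>\<gamma>\<^sup>k\<close>.\<close>
definition prefix_point :: "nat list \<Rightarrow> real \<Rightarrow> real" where
  "prefix_point p x = (x + (\<Sum>i<length p. real (p ! i) * real b ^ i)) / real b ^ length p"

lemma digit_sum_le:
  assumes "\<And>i. i < k \<Longrightarrow> s i < b"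
  shows "(\<Sum>i<k. real (s i) * real b ^ i) \<le> real b ^ k - 1"
  using assms
proof (induction k)
  case (Suc k)
  have "real (s k) \<le> real b - 1"
    using Suc.prems[of k] b_ge_2 by (simp add: of_nat_diff)
  then have "real (s k) * real b ^ k \<le> (real b - 1) * real b ^ k"
    by (intro mult_right_mono) auto
  then show ?case
    using Suc by (simp add: algebra_simps)
qed simp

lemma prefix_point_in_unit:
  assumes "x \<in> {0..1}" "\<forall>j\<in>set p. j < b"
  shows "prefix_point p x \<in> {0..1}"
proof -
  have "(\<Sum>i<length p. real (p ! i) * real b ^ i) \<le> real b ^ length p - 1"
    using assms(2) by (intro digit_sum_le) auto
  moreover have "(\<Sum>i<length p. real (p ! i) * real b ^ i) \<ge> 0"
    by (intro sum_nonneg) auto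
  ultimately show ?thesis
    using assms(1) b_pos unfolding prefix_point_def by (auto simp: field_simps)
qed

lemma prefix_point_affine:
  "prefix_point p x = (\<Sum>i<length p. real (p ! i) * real b ^ i) / real b ^ length p
    + 1 / real b ^ length p * x"
  unfolding prefix_point_def by (simp add: add_divide_distrib)

lemma digit_point_append:
  assumes "j < length u"
  shows "digit_point (\<lambda>i. (p @ u) ! i) (length p + j) x = digit_point (\<lambda>i. u ! i) j (prefix_point p x)"
proof -
  let ?k = "length p"
  have "(\<Sum>i\<le>?k + j. real ((p @ u) ! i) * real b ^ i)
      = (\<Sum>i<?k + Suc j. real ((p @ u) ! i) * real b ^ i)"
    by (simp add: lessThan_Suc_atMost)
  also have "\<dots> = (\<Sum>i<?k. real ((p @ u) ! i) * real b ^ i)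
        + (\<Sum>i<Suc j. real ((p @ u) ! (?k + i)) * real b ^ (?k + i))"
    by (rule sum_lessThan_add)
  also have "(\<Sum>i<?k. real ((p @ u) ! i) * real b ^ i) = (\<Sum>i<?k. real (p ! i) * real b ^ i)"
    by (intro sum.cong) (auto simp: nth_append)
  also have "(\<Sum>i<Suc j. real ((p @ u) ! (?k + i)) * real b ^ (?k + i))
      = real b ^ ?k * (\<Sum>i\<le>j. real (u ! i) * real b ^ i)"
    by (simp only: nth_append_length_plus)
      (simp add: sum_distrib_left lessThan_Suc_atMost power_add algebra_simps del: sum.lessThan_Suc)
  finally show ?thesis
    unfolding digit_point_def prefix_point_def using b_pos by (simp add: power_add field_simps)
qed

lemma S_fin_append:
  "S_fin b \<gamma> \<phi> x (p @ u) = S_fin b \<gamma> \<phi> x p + \<gamma> ^ length p * S_fin b \<gamma> \<phi> (prefix_point p x) u"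
proof -
  have "digit_point (\<lambda>i. (p @ u) ! i) n x = digit_point (\<lambda>i. p ! i) n x" if "n < length p" for n
    by (rule digit_point_cong) (use that in \<open>auto simp: nth_append\<close>)
  then show ?thesis
    unfolding S_fin_eq S_fin_deriv_def S_term_def Dphi_0 length_append sum_lessThan_add
    by (simp add: digit_point_append power_add sum_distrib_left mult.assoc)
qed

lemma S_fin_continuous: "continuous_on UNIV (\<lambda>x. S_fin b \<gamma> \<phi> x u)"
  unfolding S_fin_eq
  by (intro continuous_at_imp_continuous_on ballI DERIV_isCont[OF S_fin_deriv_has_derivative])

lemma prefix_point_continuous: "continuous_on UNIV (prefix_point p)"
  unfolding prefix_point_def using b_pos by (intro continuous_intros) auto

end

section \<open>Exceptional sets and separation\<close>

lemma hat_unique: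
  fixes \<gamma> :: real
  assumes "b \<ge> 1" "0 < \<gamma>" "\<gamma> < 1"
  shows "\<exists>!k::int. \<gamma> powi k \<le> 1 / real b ^ n \<and> 1 / real b ^ n < \<gamma> powi (k - 1)"
proof
  define t where "t = 1 / real b ^ n"
  have t: "t > 0" "t \<le> 1"
    using assms by (auto simp: t_def)
  have ex: "\<exists>j. \<gamma> ^ j \<le> t"
    using real_arch_pow_inv[OF t(1) assms(3)] by (auto intro: less_imp_le)
  define j where "j = (LEAST j. \<gamma> ^ j \<le> t)"
  have j: "\<gamma> ^ j \<le> t"
    unfolding j_def by (rule LeastI_ex[OF ex])
  have j': "t < \<gamma> powi (int j - 1)"
  proof (cases j)
    case 0
    then have "\<gamma> powi (int j - 1) = 1 / \<gamma>"
      by (simp add: power_int_minus inverse_eq_divide)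
    moreover have "1 < 1 / \<gamma>"
      using assms by simp
    ultimately show ?thesis
      using t by simp
  next
    case (Suc i)
    then have "\<not> \<gamma> ^ i \<le> t"
      using not_less_Least[of i "\<lambda>j. \<gamma> ^ j \<le> t"] by (simp add: j_def)
    then show ?thesis
      using Suc by simp
  qed
  show "\<gamma> powi int j \<le> 1 / real b ^ n \<and> 1 / real b ^ n < \<gamma> powi (int j - 1)"
    using j j' by (simp add: t_def)
  have decreasing: "\<gamma> powi l \<le> \<gamma> powi k" if "k \<le> l" for k l :: int
    using power_int_decreasing[OF that, of \<gamma>] assms by auto
  fix k :: int
  assume "\<gamma> powi k \<le> 1 / real b ^ n \<and> 1 / real b ^ n < \<gamma> powi (k - 1)"
  then have "\<not> k < int j" "\<not> int j < k"
    using j j' decreasing[of k "int j - 1"] decreasing[of "int j" "k - 1"] by (auto simp: t_def)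
  then show "k = int j"
    by linarith
qed

lemma eventually_hat_ge:
  fixes \<gamma> :: real
  assumes "b \<ge> 2" "0 < \<gamma>" "\<gamma> < 1"
  shows "eventually (\<lambda>n. k \<le> hat b \<gamma> n) sequentially"
proof -
  have "0 < \<gamma> powi (k - 1)" "1 / real b < 1"
    using assms by auto
  then obtain n1 where n1: "(1 / real b) ^ n1 < \<gamma> powi (k - 1)"
    using real_arch_pow_inv by blast
  have "k \<le> hat b \<gamma> n" if "n1 \<le> n" for n
  proof (rule ccontr)
    assume "\<not> k \<le> hat b \<gamma> n"
    then have "\<gamma> powi (k - 1) \<le> \<gamma> powi hat b \<gamma> n"
      using power_int_decreasing[of "hat b \<gamma> n" "k - 1" \<gamma>] assms by auto
    also have "\<dots> \<le> (1 / real b) ^ n"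
      using theI'[OF hat_unique[of b \<gamma> n]] assms unfolding hat_def by (simp add: power_one_over)
    also have "\<dots> \<le> (1 / real b) ^ n1"
      using that assms by (intro power_decreasing) auto
    finally show False
      using n1 by simp
  qed
  then show ?thesis
    unfolding eventually_sequentially by blast
qed

context weierstrass_series
begin

text \<open>The points \<open>x\<close> at which two words \<open>p u\<close> and \<open>p v\<close> of length \<open>N\<close>, with \<open>|p| = k\<close>,
  \<open>u ! 0 \<noteq> v ! 0\<close> and \<open>|u| > L\<close>, have \<open>S\<close>-values within \<open>\<gamma>\<^sup>k \<delta>\<close> of each other
  (by \<open>S_fin_append\<close>).\<close>
definition exceptional_set :: "nat \<Rightarrow> real \<Rightarrow> nat \<Rightarrow> real set" where
  "exceptional_set L \<delta> N = (\<Union>k<N. \<Union>p\<in>words b k. \<Union>u\<in>words b (N - k). \<Union>v\<in>words b (N - k).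
     if u ! 0 \<noteq> v ! 0 \<and> L < N - k
     then sublevel (\<lambda>x. S_fin b \<gamma> \<phi> (prefix_point p x) u - S_fin b \<gamma> \<phi> (prefix_point p x) v) {0..1} \<delta>
     else {})"

lemma sets_prefix_sublevel:
  "sublevel (\<lambda>x. S_fin b \<gamma> \<phi> (prefix_point p x) u - S_fin b \<gamma> \<phi> (prefix_point p x) v) {0..1} \<delta>
    \<in> sets lborel"
  by (intro sets_sublevel continuous_on_diff is_interval_cc
      continuous_on_compose2[OF S_fin_continuous prefix_point_continuous]) auto

lemma sets_exceptional_set: "exceptional_set L \<delta> N \<in> sets lborel"
  unfolding exceptional_set_def
  by (intro sets.finite_UN finite_words finite_lessThan ballI)
    (simp add: sets_prefix_sublevel[unfolded sets_lborel])

lemma exceptional_set_subset: "exceptional_set L \<delta> N \<subseteq> {0..1}"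
  unfolding exceptional_set_def sublevel_def by auto

lemma sublevel_subset_exceptional_set:
  assumes "k < N" "p \<in> words b k" "u \<in> words b (N - k)" "v \<in> words b (N - k)"
    and "u ! 0 \<noteq> v ! 0" "L < N - k"
  shows "sublevel (\<lambda>x. S_fin b \<gamma> \<phi> (prefix_point p x) u - S_fin b \<gamma> \<phi> (prefix_point p x) v) {0..1} \<delta>
    \<subseteq> exceptional_set L \<delta> N"
proof
  fix x
  assume "x \<in> sublevel (\<lambda>x. S_fin b \<gamma> \<phi> (prefix_point p x) u - S_fin b \<gamma> \<phi> (prefix_point p x) v) {0..1} \<delta>"
  then show "x \<in> exceptional_set L \<delta> N"
    unfolding exceptional_set_def using assms
    by (intro UN_I[where a = k] UN_I[where a = p] UN_I[where a = u] UN_I[where a = v]) auto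
qed

lemma separation_outside_exceptional_set:
  assumes x: "x \<in> {0..1}" and l: "L \<le> l" "l < N" and w: "w \<in> words b l"
    and js: "js \<in> words b (N - l)" "js' \<in> words b (N - l)"
    and ne: "S_fin b \<gamma> \<phi> x (js @ w) \<noteq> S_fin b \<gamma> \<phi> x (js' @ w)"
    and \<rho>: "\<rho> > 0" and regular: "x \<notin> exceptional_set L (2 * \<rho> ^ N) N"
  shows "(\<gamma> * \<rho>) ^ N < \<bar>S_fin b \<gamma> \<phi> x (js @ w) - S_fin b \<gamma> \<phi> x (js' @ w)\<bar>"
proof -
  have "js \<noteq> js'"
    using ne by auto
  then obtain p j u j' u' where "length p < N - l" and words: "p \<in> words b (length p)"
      "j # u \<in> words b (N - length p)" "j' # u' \<in> words b (N - length p)"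
    and "j \<noteq> j'" and U: "js @ w = p @ j # u" and V: "js' @ w = p @ j' # u'"
    using words_first_difference[OF js w l(2)] by metis
  define k where "k = length p"
  note words = words[folded k_def]
  have "k < N" "L < N - k"
    using \<open>length p < N - l\<close> l by (auto simp: k_def)
  then have "sublevel (\<lambda>x. S_fin b \<gamma> \<phi> (prefix_point p x) (j # u)
      - S_fin b \<gamma> \<phi> (prefix_point p x) (j' # u')) {0..1} (2 * \<rho> ^ N) \<subseteq> exceptional_set L (2 * \<rho> ^ N) N"
    using words \<open>j \<noteq> j'\<close> by (intro sublevel_subset_exceptional_set) auto
  then have "x \<notin> sublevel (\<lambda>x. S_fin b \<gamma> \<phi> (prefix_point p x) (j # u)
      - S_fin b \<gamma> \<phi> (prefix_point p x) (j' # u')) {0..1} (2 * \<rho> ^ N)"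
    using regular by blast
  then have "2 * \<rho> ^ N \<le> \<bar>S_fin b \<gamma> \<phi> (prefix_point p x) (j # u) - S_fin b \<gamma> \<phi> (prefix_point p x) (j' # u')\<bar>"
    using x by (simp add: sublevel_def not_less)
  then have "\<gamma> ^ k * (2 * \<rho> ^ N)
      \<le> \<bar>S_fin b \<gamma> \<phi> x (js @ w) - S_fin b \<gamma> \<phi> x (js' @ w)\<bar>"
    unfolding U V S_fin_append k_def using gamma_pos
    by (simp add: abs_mult right_diff_distrib[symmetric] mult_left_mono)
  moreover have "(\<gamma> * \<rho>) ^ N < \<gamma> ^ k * (2 * \<rho> ^ N)"
  proof -
    have "\<gamma> ^ N \<le> \<gamma> ^ k"
      using \<open>k < N\<close> gamma_pos gamma_less_1 by (intro power_decreasing) auto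
    then have "(\<gamma> * \<rho>) ^ N \<le> \<gamma> ^ k * \<rho> ^ N"
      using \<rho> by (simp add: power_mult_distrib mult_right_mono)
    moreover have "0 < \<gamma> ^ k * \<rho> ^ N" "\<gamma> ^ k * (2 * \<rho> ^ N) = 2 * (\<gamma> ^ k * \<rho> ^ N)"
      using gamma_pos \<rho> by simp_all
    ultimately show ?thesis
      by linarith
  qed
  ultimately show ?thesis
    by linarith
qed

lemma measure_prefix_sublevel_le:
  assumes p: "p \<in> words b k"
  shows "measure lborel
      (sublevel (\<lambda>x. S_fin b \<gamma> \<phi> (prefix_point p x) u - S_fin b \<gamma> \<phi> (prefix_point p x) v) {0..1} \<delta>)
    \<le> real b ^ k * measure lborel (sublevel (\<lambda>y. S_fin b \<gamma> \<phi> y u - S_fin b \<gamma> \<phi> y v) {0..1} \<delta>)"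
proof -
  define B where "B = sublevel (\<lambda>y. S_fin b \<gamma> \<phi> y u - S_fin b \<gamma> \<phi> y v) {0..1} \<delta>"
  have B: "B \<in> sets lborel" "B \<subseteq> {0..1}"
    unfolding B_def by (intro sets_sublevel continuous_on_diff S_fin_continuous is_interval_cc)
      (auto simp: sublevel_def)
  have "length p = k" "\<forall>j\<in>set p. j < b"
    using p by (auto simp: words_def)
  then have "sublevel (\<lambda>x. S_fin b \<gamma> \<phi> (prefix_point p x) u - S_fin b \<gamma> \<phi> (prefix_point p x) v) {0..1} \<delta>
      = {x\<in>{0..1}. (\<Sum>i<k. real (p ! i) * real b ^ i) / real b ^ k + 1 / real b ^ k * x \<in> B}"
    using prefix_point_in_unit by (auto simp: sublevel_def B_def prefix_point_affine)
  also have "measure lborel \<dots> \<le> measure lborel B / (1 / real b ^ k)"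
    using b_pos by (intro measure_affine_preimage_le B) simp
  finally show ?thesis
    by (simp add: B_def mult.commute)
qed

lemma measure_exceptional_set_le:
  assumes sublevel_le: "\<And>M u v. L < M \<Longrightarrow> u \<in> words b M \<Longrightarrow> v \<in> words b M \<Longrightarrow> u ! 0 \<noteq> v ! 0 \<Longrightarrow>
      measure lborel (sublevel (\<lambda>y. S_fin b \<gamma> \<phi> y u - S_fin b \<gamma> \<phi> y v) {0..1} \<delta>) \<le> \<eta>"
    and "\<eta> \<ge> 0"
  shows "measure lborel (exceptional_set L \<delta> N) \<le> real N * real b ^ (2 * N) * \<eta>"
proof -
  define E where "E k p u v = (if u ! 0 \<noteq> v ! 0 \<and> L < N - k
     then sublevel (\<lambda>x. S_fin b \<gamma> \<phi> (prefix_point p x) u - S_fin b \<gamma> \<phi> (prefix_point p x) v) {0..1} \<delta>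
     else {})" for k p u v
  have E_sets: "E k p u v \<in> sets lborel" for k p u v
    by (simp add: E_def sets_prefix_sublevel[unfolded sets_lborel])
  have E_le: "measure lborel (E k p u v) \<le> real b ^ k * \<eta>"
    if "p \<in> words b k" "u \<in> words b (N - k)" "v \<in> words b (N - k)" for k p u v
  proof (cases "u ! 0 \<noteq> v ! 0 \<and> L < N - k")
    case True
    then have "real b ^ k * measure lborel (sublevel (\<lambda>y. S_fin b \<gamma> \<phi> y u - S_fin b \<gamma> \<phi> y v) {0..1} \<delta>)
        \<le> real b ^ k * \<eta>"
      using sublevel_le that by (intro mult_left_mono) auto
    then show ?thesis
      using measure_prefix_sublevel_le[OF that(1), of u v \<delta>] True by (simp add: E_def)
  next
    case False
    then have "E k p u v = {}"
      unfolding E_def using False by (simp only: if_not_P)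
    then show ?thesis
      using \<open>\<eta> \<ge> 0\<close> by simp
  qed
  have level_le: "measure lborel (\<Union>p\<in>words b k. \<Union>u\<in>words b (N - k). \<Union>v\<in>words b (N - k). E k p u v)
      \<le> real b ^ (2 * N) * \<eta>" if "k < N" for k
  proof -
    have "measure lborel (\<Union>p\<in>words b k. \<Union>u\<in>words b (N - k). \<Union>v\<in>words b (N - k). E k p u v)
        \<le> (\<Sum>p\<in>words b k. \<Sum>u\<in>words b (N - k). \<Sum>v\<in>words b (N - k). measure lborel (E k p u v))"
      using E_sets
      by (intro order_trans[OF measure_UNION_le] sum_mono order_trans[OF measure_UNION_le]
          measure_UNION_le sets.finite_UN finite_words ballI) auto
    also have "\<dots> \<le> (\<Sum>p\<in>words b k. \<Sum>u\<in>words b (N - k). \<Sum>v\<in>words b (N - k). real b ^ k * \<eta>)"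
      by (intro sum_mono E_le)
    also have "\<dots> = real b ^ k * real b ^ (N - k) * real b ^ (N - k) * (real b ^ k * \<eta>)"
      by (simp add: card_words)
    also have "\<dots> = real b ^ (2 * N) * \<eta>"
      using that by (simp add: power_add[symmetric] power_mult power2_eq_square algebra_simps)
    finally show ?thesis .
  qed
  have "measure lborel (exceptional_set L \<delta> N)
      \<le> (\<Sum>k<N. measure lborel (\<Union>p\<in>words b k. \<Union>u\<in>words b (N - k). \<Union>v\<in>words b (N - k). E k p u v))"
    unfolding exceptional_set_def E_def[symmetric]
    using E_sets by (intro measure_UNION_le sets.finite_UN finite_words ballI) auto
  also have "\<dots> \<le> (\<Sum>k<N. real b ^ (2 * N) * \<eta>)"
    by (intro sum_mono level_le) simp
  finally show ?thesis
    by simp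
qed

lemma measure_exceptional_set_geometric:
  assumes sublevel_le: "\<And>N u v \<delta>. L \<le> N \<Longrightarrow> u \<in> words b N \<Longrightarrow> v \<in> words b N \<Longrightarrow>
      u ! 0 \<noteq> v ! 0 \<Longrightarrow> \<delta> > 0 \<Longrightarrow>
      measure lborel (sublevel (\<lambda>y. S_fin b \<gamma> \<phi> y u - S_fin b \<gamma> \<phi> y v) {0..1} \<delta>) \<le> C * \<delta> powr \<alpha>"
    and C: "C \<ge> 0" and \<rho>: "\<rho> > 0" "\<rho> powr \<alpha> = 1 / (4 * real b ^ 2)"
  shows "measure lborel (exceptional_set L (2 * \<rho> ^ N) N) \<le> C * 2 powr \<alpha> * (1/2) ^ N"
proof -
  define q where "q = 1 / (4 * real b ^ 2)"
  have "measure lborel (exceptional_set L (2 * \<rho> ^ N) N)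
      \<le> real N * real b ^ (2 * N) * (C * (2 * \<rho> ^ N) powr \<alpha>)"
    using \<rho> C by (intro measure_exceptional_set_le sublevel_le) auto
  also have "(2 * \<rho> ^ N) powr \<alpha> = 2 powr \<alpha> * q ^ N"
  proof -
    have "(\<rho> ^ N) powr \<alpha> = (\<rho> powr real N) powr \<alpha>"
      using \<rho> by (simp add: powr_realpow)
    also have "\<dots> = (\<rho> powr \<alpha>) powr real N"
      by (simp add: powr_powr mult.commute)
    also have "\<dots> = q ^ N"
      using \<rho> b_pos by (simp add: q_def powr_realpow)
    finally show ?thesis
      using \<rho> by (simp add: powr_mult)
  qed
  also have "real N * real b ^ (2 * N) * (C * (2 powr \<alpha> * q ^ N)) = C * 2 powr \<alpha> * (real N * (1/4) ^ N)"
  proof -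
    have "real b ^ (2 * N) * q ^ N = (1/4) ^ N"
      unfolding q_def using b_pos by (simp add: power_mult power_divide power_mult_distrib field_simps)
        (simp add: power_mult[symmetric] mult.commute)
    then show ?thesis
      by (simp add: algebra_simps)
  qed
  also have "\<dots> \<le> C * 2 powr \<alpha> * (1/2) ^ N"
  proof (rule mult_left_mono)
    have "real N \<le> 2 ^ N"
      using less_exp[of N] by (metis less_imp_le of_nat_le_iff of_nat_numeral of_nat_power)
    then have "real N * (1/4) ^ N \<le> 2 ^ N * (1/4) ^ N"
      by (intro mult_right_mono) auto
    then show "real N * (1/4) ^ N \<le> (1/2) ^ N"
      by (simp add: power_mult_distrib[symmetric])
  qed (use C in simp)
  finally show ?thesis .
qed

lemma Xset_separated:
  assumes x: "x \<in> {0..1}" and "L \<le> l" "w \<in> words b l" "\<rho> > 0"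
    and regular: "x \<notin> exceptional_set L (2 * \<rho> ^ N) N"
    and pq: "p \<in> Xset b \<gamma> \<phi> w x (int N)" "q \<in> Xset b \<gamma> \<phi> w x (int N)" "p \<noteq> q"
  shows "(\<gamma> * \<rho>) ^ N < \<bar>p - q\<bar>"
proof (cases "l < N")
  case True
  have "length w = l"
    using assms by (simp add: words_def)
  then obtain js js' where "js \<in> words b (N - l)" "js' \<in> words b (N - l)"
    and "p = S_fin b \<gamma> \<phi> x (js @ w)" "q = S_fin b \<gamma> \<phi> x (js' @ w)"
    using pq True unfolding Xset_def by (auto simp: nat_diff_distrib)
  then show ?thesis
    using separation_outside_exceptional_set[OF x _ True] assms by simp
next
  case False
  then show ?thesis
    using pq assms by (simp add: Xset_def words_def)
qed

end

context weierstrass_series_H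
begin

lemma S_fin_sublevel_words:
  "\<exists>L C \<alpha>. C \<ge> 0 \<and> \<alpha> > 0 \<and> (\<forall>N u v \<delta>. L \<le> N \<longrightarrow> u \<in> words b N \<longrightarrow> v \<in> words b N \<longrightarrow>
      u ! 0 \<noteq> v ! 0 \<longrightarrow> \<delta> > 0 \<longrightarrow>
      measure lborel (sublevel (\<lambda>y. S_fin b \<gamma> \<phi> y u - S_fin b \<gamma> \<phi> y v) {0..1} \<delta>) \<le> C * \<delta> powr \<alpha>)"
proof -
  obtain m c L where c: "c > 0" and nondeg: "\<And>s t N y. (\<forall>i<N. s i < b) \<and> (\<forall>i<N. t i < b) \<and>
      s 0 \<noteq> t 0 \<and> L \<le> N \<and> y \<in> {0..1} \<Longrightarrow> \<exists>r\<le>m. c \<le> \<bar>S_fin_deriv r s N y - S_fin_deriv r t N y\<bar>"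
    using S_fin_derivs_nondegenerate by blast
  define K where "K = 2 * Dphi_bound (Suc m) / (1 - \<gamma>)"
  have K: "K > 0"
    using Dphi_bound_pos gamma_less_1 by (simp add: K_def)
  define \<alpha> :: real where "\<alpha> = (1/2) ^ m"
  define C where "C = real (nat \<lceil>2 * K / c\<rceil> + 1) * 6 ^ m * (2 / c) powr \<alpha>"
  have "measure lborel (sublevel (\<lambda>y. S_fin b \<gamma> \<phi> y u - S_fin b \<gamma> \<phi> y v) {0..1} \<delta>) \<le> C * \<delta> powr \<alpha>"
    if N: "L \<le> N" and u: "u \<in> words b N" and v: "v \<in> words b N" and head: "u ! 0 \<noteq> v ! 0"
      and \<delta>: "\<delta> > 0" for N u v \<delta>
  proof -
    define F where "F r y = S_fin_deriv r (\<lambda>i. u ! i) N y - S_fin_deriv r (\<lambda>i. v ! i) N y" for r y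
    have "F 0 = (\<lambda>y. S_fin b \<gamma> \<phi> y u - S_fin b \<gamma> \<phi> y v)"
      using u v by (auto simp: F_def S_fin_eq words_def)
    moreover have "measure lborel (sublevel (F 0) {0..1} \<delta>)
        \<le> real (nat \<lceil>2 * K / c\<rceil> + 1) * 6 ^ m * (2 * \<delta> / c) powr ((1/2) ^ m)"
    proof (rule measure_sublevel_unit_interval[OF _ K _ _ c \<delta>])
      show "(F j has_real_derivative F (Suc j) y) (at y)" for j y
        unfolding F_def[abs_def] by (intro DERIV_diff S_fin_deriv_has_derivative)
      show "\<bar>F (Suc r) y\<bar> \<le> K" if "r \<le> m" for r y
      proof -
        have "\<bar>F (Suc r) y\<bar> \<le> 2 * Dphi_bound (Suc r) / (1 - \<gamma>)"
          using abs_S_fin_deriv_le[of "Suc r" "\<lambda>i. u ! i" N y] abs_S_fin_deriv_le[of "Suc r" "\<lambda>i. v ! i" N y]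
          unfolding F_def by linarith
        also have "\<dots> \<le> K"
          unfolding K_def using Dphi_bound_mono[of "Suc r" "Suc m"] that gamma_less_1
          by (intro divide_right_mono) auto
        finally show ?thesis .
      qed
      show "\<exists>r\<le>m. c \<le> \<bar>F r y\<bar>" if "y \<in> {0..1}" for y
        using nondeg[of N "\<lambda>i. u ! i" "\<lambda>i. v ! i" y] u v head N that
        by (auto simp: F_def words_def)
    qed
    moreover have "(2 * \<delta> / c) powr ((1/2) ^ m) = (2 / c) powr \<alpha> * \<delta> powr \<alpha>"
      unfolding \<alpha>_def using c \<delta> by (simp add: powr_mult[symmetric])
    ultimately show ?thesis
      by (simp add: C_def mult.assoc)
  qed
  moreover have "C \<ge> 0" "\<alpha> > 0"
    using c by (simp_all add: C_def \<alpha>_def)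
  ultimately show ?thesis
    by blast
qed

lemma AE_eventually_not_exceptional:
  "\<exists>L \<rho>. \<rho> > 0 \<and> (AE x in lborel. eventually (\<lambda>N. x \<notin> exceptional_set L (2 * \<rho> ^ N) N) sequentially)"
proof -
  obtain L C \<alpha> where C: "C \<ge> 0" and \<alpha>: "\<alpha> > 0" and sublevel_le: "\<And>N u v \<delta>. L \<le> N \<Longrightarrow>
      u \<in> words b N \<Longrightarrow> v \<in> words b N \<Longrightarrow> u ! 0 \<noteq> v ! 0 \<Longrightarrow> \<delta> > 0 \<Longrightarrow>
      measure lborel (sublevel (\<lambda>y. S_fin b \<gamma> \<phi> y u - S_fin b \<gamma> \<phi> y v) {0..1} \<delta>) \<le> C * \<delta> powr \<alpha>"
    using S_fin_sublevel_words by blast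
  define \<rho> where "\<rho> = (1 / (4 * real b ^ 2)) powr (1 / \<alpha>)"
  have \<rho>: "\<rho> > 0" "\<rho> powr \<alpha> = 1 / (4 * real b ^ 2)"
    using b_pos \<alpha> by (auto simp: \<rho>_def powr_powr)
  have "AE x in lborel. eventually (\<lambda>N. x \<in> space lborel - exceptional_set L (2 * \<rho> ^ N) N) sequentially"
  proof (rule borel_cantelli_AE1)
    show "exceptional_set L (2 * \<rho> ^ N) N \<in> sets lborel" for N
      by (rule sets_exceptional_set)
    show "emeasure lborel (exceptional_set L (2 * \<rho> ^ N) N) < \<infinity>" for N
      using emeasure_mono[OF exceptional_set_subset, of lborel L "2 * \<rho> ^ N" N]
      by (simp add: order.strict_trans1)
    show "summable (\<lambda>N. measure lborel (exceptional_set L (2 * \<rho> ^ N) N))"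
      by (rule summable_comparison_test[of _ "\<lambda>N. C * 2 powr \<alpha> * (1/2) ^ N"])
        (use measure_exceptional_set_geometric[OF sublevel_le C \<rho>] in
          \<open>auto intro: summable_mult summable_geometric\<close>)
  qed
  then show ?thesis
    using \<rho> by auto
qed

lemma eventually_Xset_separated:
  assumes x: "x \<in> {0..1}" and "L \<le> l" "\<rho> > 0"
    and regular: "eventually (\<lambda>N. x \<notin> exceptional_set L (2 * \<rho> ^ N) N) sequentially"
  shows "eventually (\<lambda>n. \<forall>w\<in>words b l. \<forall>p\<in>Xset b \<gamma> \<phi> w x (hat b \<gamma> n).
    \<forall>q\<in>Xset b \<gamma> \<phi> w x (hat b \<gamma> n). p \<noteq> q \<longrightarrow> (\<gamma> * \<rho>) powi hat b \<gamma> n < \<bar>p - q\<bar>) sequentially"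
proof -
  obtain N0 where N0: "\<And>N. N0 \<le> N \<Longrightarrow> x \<notin> exceptional_set L (2 * \<rho> ^ N) N"
    using regular unfolding eventually_sequentially by blast
  show ?thesis
    using eventually_hat_ge[OF b_ge_2 gamma_pos gamma_less_1, of "int N0"]
  proof eventually_elim
    case (elim n)
    then obtain N where "hat b \<gamma> n = int N" "N0 \<le> N"
      by (metis nat_int nat_le_iff nonneg_int_cases of_nat_0_le_iff order_trans)
    then show ?case
      using Xset_separated[OF x assms(2) _ assms(3) N0] by simp
  qed
qed

lemma infinitely_many_separated_levels:
  assumes "x \<in> {0..1}" "L \<le> l" "\<rho> > 0"
    and "eventually (\<lambda>N. x \<notin> exceptional_set L (2 * \<rho> ^ N) N) sequentially"
  shows "\<exists>Q::nat set. Q \<subseteq> {1..} \<and> infinite Q \<and>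
    (\<forall>w\<in>words b l. \<forall>n\<in>Q. \<forall>p\<in>Xset b \<gamma> \<phi> w x (hat b \<gamma> n). \<forall>q\<in>Xset b \<gamma> \<phi> w x (hat b \<gamma> n).
      p \<noteq> q \<longrightarrow> \<bar>p - q\<bar> > (\<gamma> * \<rho>) powi (hat b \<gamma> n))"
proof -
  obtain n1 where "\<forall>n\<ge>n1. \<forall>w\<in>words b l. \<forall>p\<in>Xset b \<gamma> \<phi> w x (hat b \<gamma> n).
      \<forall>q\<in>Xset b \<gamma> \<phi> w x (hat b \<gamma> n). p \<noteq> q \<longrightarrow> (\<gamma> * \<rho>) powi hat b \<gamma> n < \<bar>p - q\<bar>"
    using eventually_Xset_separated[OF assms] unfolding eventually_sequentially by blast
  then show ?thesis
    by (intro exI[of _ "{max 1 n1..}"] conjI infinite_Ici) auto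
qed

end

theorem theorem4p2:
  fixes b :: nat and \<gamma> :: real and \<phi> :: "real \<Rightarrow> real"
  assumes "b \<ge> 2" and "0 < \<gamma>" and "\<gamma> < 1"
    and "real_analytic \<phi>"
    and "\<forall>x. \<phi> (x + 1) = \<phi> x"
    and "cond_H b \<gamma> \<phi>"
  shows "\<exists>l0::nat. \<exists>eps0::real. eps0 > 0 \<and>
    (AE x in lborel. x \<in> {0..1} \<longrightarrow>
      (\<forall>l\<ge>l0. \<exists>Q::nat set. Q \<subseteq> {1..} \<and> infinite Q \<and>
         (\<forall>w\<in>words b l. \<forall>n\<in>Q. \<forall>p\<in>Xset b \<gamma> \<phi> w x (hat b \<gamma> n).
            \<forall>q\<in>Xset b \<gamma> \<phi> w x (hat b \<gamma> n). p \<noteq> q \<longrightarrow>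
              \<bar>p - q\<bar> > eps0 powi (hat b \<gamma> n))))"
proof -
  interpret weierstrass_series_H \<phi> b \<gamma>
    by unfold_locales (use assms in auto)
  obtain L \<rho> where \<rho>: "\<rho> > 0"
    and AE: "AE x in lborel. eventually (\<lambda>N. x \<notin> exceptional_set L (2 * \<rho> ^ N) N) sequentially"
    using AE_eventually_not_exceptional by blast
  have "AE x in lborel. x \<in> {0..1} \<longrightarrow> (\<forall>l\<ge>L. \<exists>Q::nat set. Q \<subseteq> {1..} \<and> infinite Q \<and>
      (\<forall>w\<in>words b l. \<forall>n\<in>Q. \<forall>p\<in>Xset b \<gamma> \<phi> w x (hat b \<gamma> n). \<forall>q\<in>Xset b \<gamma> \<phi> w x (hat b \<gamma> n).
        p \<noteq> q \<longrightarrow> \<bar>p - q\<bar> > (\<gamma> * \<rho>) powi (hat b \<gamma> n)))"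
    using AE
    by eventually_elim (use infinitely_many_separated_levels[OF _ _ \<rho>] in simp)
  then show ?thesis
    using \<rho> assms(2) by (intro exI[of _ L] exI[of _ "\<gamma> * \<rho>"]) auto
qed

end
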